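(* Let $\mu$ be a strict partition. Then for every integer $n\ge0$, $$\sum_{|\lambda/\mu|=n}\frac{2^{|\lambda|-\ell(\lambda)-|\mu|+\ell(\mu)}f_{\lambda/\mu}H_\mu}{H_{\lambda}}\Bigl(\sum_{\square\in\lambda}\binom{c_{\square}}{2}-\sum_{\square\in\mu}\binom{c_{\square}}{2}\Bigr)=\binom{n}{2}+n|\mu|,$$ where the sum ranges over all strict partitions $\lambda\supseteq\mu$ with $|\lambda|-|\mu|=n$.
   Context: A strict partition is a finite strictly decreasing sequence of positive integers $\lambda=(\lambda_1>\lambda_2>\cdots>\lambda_\ell)$ (the empty sequence $\emptyset$ is allowed); $|\lambda|=\sum_i\lambda_i$ is its size, $\ell(\lambda)=\ell$ its length, and $\lambda_i=0$ for $i>\ell(\lambda)$. The (shifted Young) diagram of $\lambda$ is the set of boxes $(i,j)$ with $1\le i\le \ell(\lambda)$ and $i+1\le j\le i+\lambda_i$ (row $i$, column $j$); $\lambda$ is identified with its diagram. The content of a box $\square=(i,j)$ is $c_\square=j-i$. The hook length $h_\square$ of $\square=(i,j)\in\lambda$ is the number of boxes of $\lambda$ in row $i$ strictly to the right of $\square$, plus the number of boxes $(i',j)\in\lambda$ with $i'>i$, plus $1$, plus $\lambda_j$. $H_\lambda=\prod_{\square\in\lambda}h_\square$ ($H_\emptyset=1$). For strict partitions write $\lambda\supseteq\mu$ if $\lambda_i\ge\mu_i$ for all $i$; then $\lambda/\mu$ denotes the set of boxes of $\lambda$ not in $\mu$, and $|\lambda/\mu|=|\lambda|-|\mu|$. $f_{\lambda/\mu}$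 is the number of standard shifted Young tableaux of shape $\lambda/\mu$, i.e. bijective fillings of the boxes of $\lambda/\mu$ with $1,\dots,|\lambda/\mu|$ increasing from left to right along rows and from top to bottom along columns ($f_{\mu/\mu}=1$). *)

theory Defs
  imports Complex_Main
begin

definition strict_partition :: "nat list \<Rightarrow> bool" where
  "strict_partition xs \<longleftrightarrow> sorted_wrt (>) xs \<and> (\<forall>x\<in>set xs. 0 < x)"

text \<open>lambda_i (1-based), with lambda_i = 0 for i > length.\<close>
definition part :: "nat list \<Rightarrow> nat \<Rightarrow> nat" where
  "part xs i = (if 1 \<le> i \<and> i \<le> length xs then xs ! (i - 1) else 0)"

definition psize :: "nat list \<Rightarrow> nat" where
  "psize xs = sum_list xs"

definition plen :: "nat list \<Rightarrow> nat" where
  "plen xs = length xs"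

text \<open>Shifted diagram: boxes (i,j) with 1 <= i <= l and i+1 <= j <= i + lambda_i.\<close>
definition diagram :: "nat list \<Rightarrow> (nat \<times> nat) set" where
  "diagram xs = {(i, j). 1 \<le> i \<and> i \<le> length xs \<and> i + 1 \<le> j \<and> j \<le> i + part xs i}"

definition content :: "nat \<times> nat \<Rightarrow> int" where
  "content b = int (snd b) - int (fst b)"

definition hook :: "nat list \<Rightarrow> nat \<times> nat \<Rightarrow> nat" where
  "hook xs b = (case b of (i, j) \<Rightarrow>
     card {j'. (i, j') \<in> diagram xs \<and> j' > j}
   + card {i'. (i', j) \<in> diagram xs \<and> i' > i} + 1 + part xs j)"

definition hookprod :: "nat list \<Rightarrow> nat" where
  "hookprod xs = (\<Prod>b\<in>diagram xs. hook xs b)"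

definition contains :: "nat list \<Rightarrow> nat list \<Rightarrow> bool" where
  "contains lam mu \<longleftrightarrow> (\<forall>i. part mu i \<le> part lam i)"

definition skew :: "nat list \<Rightarrow> nat list \<Rightarrow> (nat \<times> nat) set" where
  "skew lam mu = diagram lam - diagram mu"

text \<open>Standard shifted Young tableaux of shape S (as fillings, extended by 0 outside S).\<close>
definition standard_tableaux :: "(nat \<times> nat) set \<Rightarrow> ((nat \<times> nat) \<Rightarrow> nat) set" where
  "standard_tableaux S = {T. bij_betw T S {1..card S} \<and> (\<forall>b. b \<notin> S \<longrightarrow> T b = 0)
      \<and> (\<forall>i j j'. (i, j) \<in> S \<and> (i, j') \<in> S \<and> j < j' \<longrightarrow> T (i, j) < T (i, j'))
      \<and> (\<forall>i i' j. (i, j) \<in> S \<and> (i', j) \<in> S \<and> i < i' \<longrightarrow> T (i, j) < T (i', j))}"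

definition num_syt :: "nat list \<Rightarrow> nat list \<Rightarrow> nat" where
  "num_syt lam mu = card (standard_tableaux (skew lam mu))"

end

theory Submission
  imports Defs "HOL-Computational_Algebra.Polynomial"
begin

text \<open>
  Deleting the entry 1 from a standard tableau of shape \<lambda>/\<mu> leaves one of shape \<lambda>/\<mu>',
  where \<mu>' arises from \<mu> by adding a single box; so f(\<lambda>/\<mu>) is the sum of the f(\<lambda>/\<mu>').
  The weight W(\<lambda>,\<mu>) = 2^(\<dots>) H(\<mu>)/H(\<lambda>) is multiplicative, W(\<lambda>,\<mu>) = W(\<lambda>,\<mu>') W(\<mu>',\<mu>),
  hence the weighted sums over all \<lambda> with |\<lambda>/\<mu>| = n satisfy a recursion over \<mu>', and the
  theorem follows by induction on n from the two one-box identities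
  \<Sum> W(\<mu>',\<mu>) = 1  and  \<Sum> W(\<mu>',\<mu>) x(x+1)/2 = |\<mu>|  (summing over the one-box extensions \<mu>'),
  where x is the length of the row of \<mu> receiving the new box (its content is x + 1).

  By the product formula H(\<mu>) = \<Prod>_i \<mu>_i! \<Prod>_{i<j} (\<mu>_i + \<mu>_j)/(\<mu>_i - \<mu>_j) the one-box weights
  are rational functions of the parts. In the variables Q(x) = x(x+1) and q(y) = (y-1)y they are
  the Lagrange interpolation coefficients at the nodes Q(0), Q(\<mu>_1), \<dots>, Q(\<mu>_l), and the two
  identities compare top coefficients of \<Prod>_y (t - q(y)) and of \<Prod>_y (t - q(y)) - \<Prod>_y (t - Q(y)).
  Rows that cannot receive a box need no separate treatment: their weight has a factor Q(x) - q(x+1) = 0.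
\<close>

hide_const (open) Polynomial.content

section \<open>Lagrange interpolation\<close>

lemma
  fixes f :: "'b \<Rightarrow> 'a::field"
  assumes "finite W"
  shows degree_prod_monic_linear: "degree (\<Prod>w\<in>W. [:-f w, 1:]) = card W"
    and coeff_prod_monic_linear_top: "coeff (\<Prod>w\<in>W. [:-f w, 1:]) (card W) = 1"
proof -
  show d: "degree (\<Prod>w\<in>W. [:-f w, 1:]) = card W"
    by (subst degree_prod_eq_sum_degree) auto
  have "lead_coeff (\<Prod>w\<in>W. [:-f w, 1:]) = 1" by (simp add: lead_coeff_prod)
  then show "coeff (\<Prod>w\<in>W. [:-f w, 1:]) (card W) = 1" using d by simp
qed

lemma coeff_prod_monic_linear_subtop:
  fixes f :: "'b \<Rightarrow> 'a::field"
  assumes "finite W" "card W = Suc m"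
  shows "coeff (\<Prod>w\<in>W. [:-f w, 1:]) m = - (\<Sum>w\<in>W. f w)"
  using assms
proof (induction W arbitrary: m rule: finite_induct)
  case empty then show ?case by simp
next
  case (insert a F)
  then have cF: "card F = m" by simp
  have "(\<Prod>w\<in>insert a F. [:-f w, 1:]) = [:-f a, 1:] * (\<Prod>w\<in>F. [:-f w, 1:])"
    using insert by simp
  also have "coeff \<dots> m = - f a * coeff (\<Prod>w\<in>F. [:-f w, 1:]) m
      + (case m of 0 \<Rightarrow> 0 | Suc k \<Rightarrow> coeff (\<Prod>w\<in>F. [:-f w, 1:]) k)"
    by (simp add: coeff_pCons split: nat.split)
  also have "coeff (\<Prod>w\<in>F. [:-f w, 1:]) m = 1"
    using coeff_prod_monic_linear_top[OF insert(1), of f] cF by simp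
  also have "(case m of 0 \<Rightarrow> 0 | Suc k \<Rightarrow> coeff (\<Prod>w\<in>F. [:-f w, 1:]) k) = - (\<Sum>w\<in>F. f w)"
  proof (cases m)
    case 0 then show ?thesis using cF insert by simp
  next
    case (Suc k) then show ?thesis using insert.IH[of k] cF by simp
  qed
  finally show ?case using insert by simp
qed

lemma lagrange_top_coeff:
  fixes Z :: "'a::field set" and G :: "'a poly"
  assumes fin: "finite Z" and cZ: "card Z = Suc m" and dG: "degree G \<le> m"
  shows "(\<Sum>z\<in>Z. poly G z / (\<Prod>w\<in>Z-{z}. z - w)) = coeff G m"
proof -
  define c where "c z = poly G z / (\<Prod>w\<in>Z-{z}. z - w)" for z
  define B where "B z = (\<Prod>w\<in>Z-{z}. [:-w, 1:])" for z
  define L where "L = (\<Sum>z\<in>Z. smult (c z) (B z))"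
  have cardB: "z \<in> Z \<Longrightarrow> card (Z - {z}) = m" for z using cZ fin by simp
  have degB: "z \<in> Z \<Longrightarrow> degree (B z) = m" for z
    unfolding B_def using degree_prod_monic_linear[of "Z-{z}" "\<lambda>w. w"] fin cardB by simp
  have cB: "z \<in> Z \<Longrightarrow> coeff (B z) m = 1" for z
    unfolding B_def using coeff_prod_monic_linear_top[of "Z-{z}" "\<lambda>w. w"] fin cardB by simp
  have dL: "degree L \<le> m" unfolding L_def
    by (rule degree_sum_le) (use fin degB in \<open>auto intro: order.trans[OF degree_smult_le]\<close>)
  have pB: "poly (B z) x = (\<Prod>w\<in>Z-{z}. x - w)" for z x
    unfolding B_def by (simp add: poly_prod)
  have interpolates: "poly L x = poly G x" if x: "x \<in> Z" for x
  proof -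
    have others: "c z * poly (B z) x = 0" if "z \<in> Z - {x}" for z
      using that x fin by (auto simp: pB intro!: prod_zero bexI[of _ x])
    have "(\<Prod>w\<in>Z-{x}. x - w) \<noteq> 0" using fin by (subst prod_zero_iff) auto
    have "poly L x = c x * poly (B x) x + (\<Sum>z\<in>Z-{x}. c z * poly (B z) x)"
      unfolding L_def by (simp add: poly_sum sum.remove[OF fin x])
    also have "\<dots> = c x * poly (B x) x" using others by (subst sum.neutral) auto
    also have "\<dots> = poly G x"
      using \<open>(\<Prod>w\<in>Z-{x}. x - w) \<noteq> 0\<close> unfolding c_def pB by simp
    finally show ?thesis .
  qed
  have "G = L"
    by (rule poly_eqI_degree[of Z]) (use interpolates cZ dG dL in auto)
  then have "coeff G m = (\<Sum>z\<in>Z. c z * coeff (B z) m)" unfolding L_def by (simp add: coeff_sum)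
  also have "\<dots> = (\<Sum>z\<in>Z. c z)" by (rule sum.cong) (auto simp: cB)
  finally show ?thesis unfolding c_def by simp
qed

section \<open>Two interpolation identities\<close>

definition pronic :: "nat \<Rightarrow> real" where "pronic y = real y * (real y + 1)"
definition pronic_prev :: "nat \<Rightarrow> real" where "pronic_prev y = (real y - 1) * real y"

definition corner_weight :: "nat set \<Rightarrow> nat \<Rightarrow> real" where
  "corner_weight X x =
     2 / (real x + 1) * (\<Prod>y\<in>X-{x}. (pronic x - pronic_prev y) / (pronic x - pronic y))"

definition new_row_weight :: "nat set \<Rightarrow> real" where
  "new_row_weight X = (\<Prod>y\<in>X. pronic_prev y / pronic y)"

lemma pronic_eq_iff [simp]: "pronic a = pronic b \<longleftrightarrow> a = b"
proof
  assume "pronic a = pronic b"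
  then have "(real a - real b) * (real a + real b + 1) = 0"
    by (simp add: pronic_def algebra_simps)
  then show "a = b" by (auto simp: add_nonneg_eq_0_iff)
qed simp

lemma pronic_0 [simp]: "pronic 0 = 0" by (simp add: pronic_def)

lemma pronic_eq_0_iff [simp]: "pronic a = 0 \<longleftrightarrow> a = 0"
  using pronic_eq_iff[of a 0] by simp

lemma card_image_pronic: "card (pronic ` A) = card A"
  by (rule card_image) (auto simp: inj_on_def)

lemma pronic_minus_pronic_prev: "pronic x - pronic_prev x = 2 * real x"
  by (simp add: pronic_def pronic_prev_def algebra_simps)

lemma pronic_minus_pronic_prev_ratio: "pronic x - pronic_prev x = 2 / (real x + 1) * pronic x"
  unfolding pronic_minus_pronic_prev by (simp add: pronic_def)

text \<open>Lagrange interpolation of \<open>\<Prod>y\<in>X. [:-pronic_prev y, 1:]\<close> at the nodes \<open>pronic ` insert 0 X\<close>.\<close>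

lemma new_row_weight_plus_corner_weights:
  assumes fin: "finite X" and X0: "0 \<notin> X"
  shows "new_row_weight X + (\<Sum>x\<in>X. corner_weight X x) = 1"
proof -
  define G where "G = (\<Prod>y\<in>X. [:-pronic_prev y, 1:])"
  define Z where "Z = pronic ` insert 0 X"
  have X0': "0 \<notin> pronic ` X" using X0 by (auto simp del: pronic_eq_iff)
  have cZ: "card Z = Suc (card X)"
    using fin X0' unfolding Z_def by (simp add: card_image_pronic)
  have "(\<Sum>z\<in>Z. poly G z / (\<Prod>w\<in>Z-{z}. z - w)) = coeff G (card X)"
    by (rule lagrange_top_coeff) (use fin cZ in \<open>auto simp: Z_def G_def degree_prod_monic_linear\<close>)
  also have "\<dots> = 1" unfolding G_def by (rule coeff_prod_monic_linear_top[OF fin])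
  finally have L: "(\<Sum>z\<in>Z. poly G z / (\<Prod>w\<in>Z-{z}. z - w)) = 1" .
  have "(\<Sum>z\<in>Z. poly G z / (\<Prod>w\<in>Z-{z}. z - w)) =
        (\<Sum>y\<in>insert 0 X. poly G (pronic y) / (\<Prod>w\<in>Z-{pronic y}. pronic y - w))"
    unfolding Z_def by (subst sum.reindex) (auto simp: inj_on_def)
  also have "\<dots> = poly G 0 / (\<Prod>w\<in>Z-{0}. 0 - w)
      + (\<Sum>y\<in>X. poly G (pronic y) / (\<Prod>w\<in>Z-{pronic y}. pronic y - w))"
    using fin X0 by simp
  also have "poly G 0 / (\<Prod>w\<in>Z-{0}. 0 - w) = new_row_weight X"
  proof -
    have "Z - {0} = pronic ` X" unfolding Z_def using X0 by auto
    then have "(\<Prod>w\<in>Z-{0}. 0 - w) = (\<Prod>y\<in>X. - pronic y)"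
      by (simp add: prod.reindex inj_on_def)
    moreover have "poly G 0 = (\<Prod>y\<in>X. - pronic_prev y)" unfolding G_def by (simp add: poly_prod)
    ultimately show ?thesis unfolding new_row_weight_def by (simp add: prod_dividef[symmetric])
  qed
  also have "(\<Sum>y\<in>X. poly G (pronic y) / (\<Prod>w\<in>Z-{pronic y}. pronic y - w))
      = (\<Sum>x\<in>X. corner_weight X x)"
  proof (rule sum.cong[OF refl])
    fix x assume x: "x \<in> X"
    have "Z - {pronic x} = insert 0 (pronic ` (X - {x}))" unfolding Z_def using X0 x by auto
    moreover have "0 \<notin> pronic ` (X - {x})" using X0' by auto
    ultimately have denom: "(\<Prod>w\<in>Z-{pronic x}. pronic x - w)
        = pronic x * (\<Prod>y\<in>X-{x}. pronic x - pronic y)"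
      using fin by (simp add: prod.reindex inj_on_def)
    have num: "poly G (pronic x) = (pronic x - pronic_prev x) * (\<Prod>y\<in>X-{x}. pronic x - pronic_prev y)"
      unfolding G_def using fin x
      by (simp add: poly_prod prod.remove left_diff_distrib)
    have "x \<noteq> 0" using x X0 by metis
    then have "pronic x \<noteq> 0" by simp
    then show "poly G (pronic x) / (\<Prod>w\<in>Z-{pronic x}. pronic x - w) = corner_weight X x"
      unfolding num denom corner_weight_def pronic_minus_pronic_prev_ratio by (simp add: prod_dividef)
  qed
  finally show ?thesis using L by simp
qed

text \<open>Lagrange interpolation of \<open>(\<Prod>y\<in>X. [:-pronic_prev y, 1:]) - (\<Prod>y\<in>X. [:-pronic y, 1:])\<close>,
  a polynomial of degree below \<open>card X\<close>, at the nodes \<open>pronic ` X\<close>.\<close>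

lemma corner_weights_pronic_sum:
  assumes fin: "finite X"
  shows "(\<Sum>x\<in>X. corner_weight X x * pronic x) = 2 * (\<Sum>x\<in>X. real x)"
proof (cases "X = {}")
  case True then show ?thesis by simp
next
  case False
  then obtain m where cX: "card X = Suc m" using fin by (cases "card X") auto
  define G where "G = (\<Prod>y\<in>X. [:-pronic_prev y, 1:]) - (\<Prod>y\<in>X. [:-pronic y, 1:])"
  define Z where "Z = pronic ` X"
  have cZ: "card Z = Suc m" unfolding Z_def using cX by (simp add: card_image_pronic)
  have dG: "degree G \<le> m"
  proof (rule degree_le, intro allI impI)
    fix i assume "m < i"
    then consider "i = card X" | "i > card X" using cX by linarith
    then show "coeff G i = 0"
    proof cases
      case 1 then show ?thesis unfolding G_def
        using coeff_prod_monic_linear_top[OF fin, of pronic_prev] coeff_prod_monic_linear_top[OF fin, of pronic]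
        by simp
    next
      case 2 then show ?thesis unfolding G_def
        using degree_prod_monic_linear[OF fin, of pronic_prev] degree_prod_monic_linear[OF fin, of pronic]
        by (simp add: coeff_eq_0)
    qed
  qed
  have "(\<Sum>z\<in>Z. poly G z / (\<Prod>w\<in>Z-{z}. z - w)) = coeff G m"
    by (rule lagrange_top_coeff) (use fin cZ dG in \<open>auto simp: Z_def\<close>)
  also have "\<dots> = (\<Sum>y\<in>X. pronic y) - (\<Sum>y\<in>X. pronic_prev y)"
    unfolding G_def
    using coeff_prod_monic_linear_subtop[OF fin cX, of pronic_prev] coeff_prod_monic_linear_subtop[OF fin cX, of pronic]
    by simp
  also have "\<dots> = 2 * (\<Sum>x\<in>X. real x)"
    by (simp add: sum_subtractf[symmetric] sum_distrib_left pronic_minus_pronic_prev)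
  finally have L: "(\<Sum>z\<in>Z. poly G z / (\<Prod>w\<in>Z-{z}. z - w)) = 2 * (\<Sum>x\<in>X. real x)" .
  have "(\<Sum>z\<in>Z. poly G z / (\<Prod>w\<in>Z-{z}. z - w)) =
        (\<Sum>y\<in>X. poly G (pronic y) / (\<Prod>w\<in>Z-{pronic y}. pronic y - w))"
    unfolding Z_def by (subst sum.reindex) (auto simp: inj_on_def)
  also have "\<dots> = (\<Sum>x\<in>X. corner_weight X x * pronic x)"
  proof (rule sum.cong[OF refl])
    fix x assume x: "x \<in> X"
    have "Z - {pronic x} = pronic ` (X - {x})" unfolding Z_def using x by auto
    then have denom: "(\<Prod>w\<in>Z-{pronic x}. pronic x - w) = (\<Prod>y\<in>X-{x}. pronic x - pronic y)"
      using fin by (simp add: prod.reindex inj_on_def)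
    have "poly (\<Prod>y\<in>X. [:-pronic y, 1:]) (pronic x) = 0" using fin x
      by (auto simp: poly_prod intro!: prod_zero bexI[of _ x])
    then have num: "poly G (pronic x) = (pronic x - pronic_prev x) * (\<Prod>y\<in>X-{x}. pronic x - pronic_prev y)"
      unfolding G_def using fin x
      by (simp add: poly_prod prod.remove left_diff_distrib)
    show "poly G (pronic x) / (\<Prod>w\<in>Z-{pronic x}. pronic x - w) = corner_weight X x * pronic x"
      unfolding num denom corner_weight_def pronic_minus_pronic_prev_ratio by (simp add: prod_dividef)
  qed
  finally show ?thesis using L by simp
qed

section \<open>Strict partitions as part functions\<close>

lemma part_0 [simp]: "part xs 0 = 0" by (simp add: Defs.part_def)
lemma part_Nil [simp]: "part [] i = 0" by (simp add: Defs.part_def)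
lemma part_beyond: "length xs < i \<Longrightarrow> part xs i = 0" by (simp add: Defs.part_def)
lemma part_Cons_1 [simp]: "part (a # xs) (Suc 0) = a" by (simp add: Defs.part_def)
lemma part_Cons_Suc: "1 \<le> i \<Longrightarrow> part (a # xs) (Suc i) = part xs i"
  by (auto simp: Defs.part_def nth_Cons split: nat.split)

lemma part_append_single: "part (xs @ [b]) = (part xs)(Suc (length xs) := b)"
  by (rule ext) (auto simp: Defs.part_def nth_append)

lemma part_le_sum_list: "part xs i \<le> sum_list xs"
  by (auto simp: Defs.part_def intro!: elem_le_sum_list)

lemma psize_eq_sum_part: "length xs \<le> N \<Longrightarrow> psize xs = (\<Sum>i=1..N. part xs i)"
proof (induction xs arbitrary: N)
  case Nil then show ?case by (simp add: Defs.psize_def)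
next
  case (Cons a xs)
  then obtain M where N: "N = Suc M" and M: "length xs \<le> M" by (cases N) auto
  have "(\<Sum>i=1..N. part (a # xs) i) = a + (\<Sum>i=2..N. part (a # xs) i)"
    using N by (simp add: sum.atLeast_Suc_atMost numeral_2_eq_2)
  also have "(\<Sum>i=2..N. part (a # xs) i) = (\<Sum>i=1..M. part (a # xs) (Suc i))"
    unfolding N by (subst sum.shift_bounds_cl_Suc_ivl[symmetric]) (simp add: numeral_2_eq_2)
  also have "\<dots> = psize xs"
    using Cons.IH[OF M] by (auto simp: part_Cons_Suc intro: sum.cong)
  finally show ?case by (simp add: Defs.psize_def)
qed

lemma strict_partition_iff_part:
  "strict_partition xs \<longleftrightarrow>
     (\<forall>i. 1 \<le> i \<and> i \<le> length xs \<longrightarrow> 0 < part xs i) \<and>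
     (\<forall>i. 1 \<le> i \<and> Suc i \<le> length xs \<longrightarrow> part xs (Suc i) < part xs i)"
proof -
  have "(\<forall>x\<in>set xs. 0 < x) \<longleftrightarrow> (\<forall>k < length xs. 0 < xs ! k)"
    by (auto simp: in_set_conv_nth)
  also have "\<dots> \<longleftrightarrow> (\<forall>i. 1 \<le> i \<and> i \<le> length xs \<longrightarrow> 0 < part xs i)"
    by (auto simp: Defs.part_def Suc_le_eq dest: spec[of _ "Suc _"])
  finally have pos: "(\<forall>x\<in>set xs. 0 < x) \<longleftrightarrow> \<dots>" .
  have "sorted_wrt (>) xs \<longleftrightarrow> (\<forall>i. Suc i < length xs \<longrightarrow> xs ! i > xs ! Suc i)"
    by (rule sorted_wrt_iff_nth_Suc_transp) (auto simp: transp_def)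
  also have "\<dots> \<longleftrightarrow> (\<forall>i. 1 \<le> i \<and> Suc i \<le> length xs \<longrightarrow> part xs (Suc i) < part xs i)"
  proof (intro iffI allI impI)
    fix i assume "\<forall>i. Suc i < length xs \<longrightarrow> xs ! i > xs ! Suc i" "1 \<le> i \<and> Suc i \<le> length xs"
    then show "part xs (Suc i) < part xs i" by (auto simp: Defs.part_def dest: spec[of _ "i - 1"])
  next
    fix i assume "\<forall>i. 1 \<le> i \<and> Suc i \<le> length xs \<longrightarrow> part xs (Suc i) < part xs i" "Suc i < length xs"
    then show "xs ! i > xs ! Suc i" by (auto simp: Defs.part_def dest: spec[of _ "Suc i"])
  qed
  finally show ?thesis unfolding Defs.strict_partition_def using pos by blast
qed

lemma strict_partition_part_pos:
  "strict_partition xs \<Longrightarrow> 1 \<le> i \<Longrightarrow> i \<le> length xs \<Longrightarrow> 0 < part xs i"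
  by (simp add: strict_partition_iff_part)

lemma strict_partition_part_Suc_less:
  "strict_partition xs \<Longrightarrow> 1 \<le> i \<Longrightarrow> Suc i \<le> length xs \<Longrightarrow> part xs (Suc i) < part xs i"
  by (simp add: strict_partition_iff_part)

lemma strict_partition_part_gap:
  assumes "strict_partition xs" "1 \<le> i" "i \<le> k" "k \<le> length xs"
  shows "part xs k + (k - i) \<le> part xs i"
  using assms(3,4)
proof (induction k rule: dec_induct)
  case base then show ?case by simp
next
  case (step k)
  then show ?case using strict_partition_part_Suc_less[OF assms(1), of k] assms(2) by simp
qed

lemma strict_partition_part_less:
  assumes "strict_partition xs" "1 \<le> i" "i < k"
  shows "part xs k < part xs i \<or> part xs k = 0"
proof (cases "k \<le> length xs")
  case True
  then have "part xs k + (k - i) \<le> part xs i" using strict_partition_part_gap[OF assms(1,2)] assms(3) by simp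
  then show ?thesis using assms(3) by linarith
qed (simp add: part_beyond)

lemma strict_partition_part_antimono:
  "strict_partition xs \<Longrightarrow> 1 \<le> i \<Longrightarrow> i \<le> k \<Longrightarrow> part xs k \<le> part xs i"
  using strict_partition_part_less[of xs i k] by (cases "i = k") auto

lemma strict_partition_distinct: "strict_partition xs \<Longrightarrow> distinct xs"
  unfolding Defs.strict_partition_def distinct_conv_nth sorted_wrt_iff_nth_less
  by (metis less_irrefl nat_neq_iff)

lemma strict_partition_Cons:
  "strict_partition (a # xs) \<longleftrightarrow> strict_partition xs \<and> (\<forall>y\<in>set xs. y < a) \<and> 0 < a"
  by (auto simp: Defs.strict_partition_def)

lemma strict_partition_append_single:
  "strict_partition (xs @ [b]) \<longleftrightarrow> strict_partition xs \<and> (\<forall>y\<in>set xs. b < y) \<and> 0 < b"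
  by (auto simp: Defs.strict_partition_def sorted_wrt_append)

lemma strict_partition_part_inject:
  assumes "strict_partition xs" "strict_partition ys" "part xs = part ys"
  shows "xs = ys"
proof -
  have last_pos: "0 < part zs (length zs)" if "strict_partition zs" "0 < length zs" for zs
    using strict_partition_part_pos[OF that(1), of "length zs"] that(2) by (simp add: Suc_le_eq)
  have len: "length xs = length ys"
  proof (rule ccontr)
    assume "length xs \<noteq> length ys"
    then consider "length xs < length ys" | "length ys < length xs" by linarith
    then show False
    proof cases
      case 1
      then have "0 < part ys (length ys)" by (intro last_pos[OF assms(2)]) auto
      with 1 show False using part_beyond[of xs "length ys"] assms(3) by simp
    next
      case 2
      then have "0 < part xs (length xs)" by (intro last_pos[OF assms(1)]) auto
      with 2 show False using part_beyond[of ys "length xs"] assms(3) by simp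
    qed
  qed
  show ?thesis
  proof (rule nth_equalityI[OF len])
    fix k assume "k < length xs"
    then show "xs ! k = ys ! k" using fun_cong[OF assms(3), of "Suc k"] len by (simp add: Defs.part_def)
  qed
qed

lemma
  assumes "strict_partition xs"
  shows inj_on_part: "inj_on (part xs) {1..length xs}"
    and image_part: "part xs ` {1..length xs} = set xs"
proof -
  show "inj_on (part xs) {1..length xs}"
  proof (rule inj_onI, rule ccontr)
    fix i k assume ik: "i \<in> {1..length xs}" "k \<in> {1..length xs}" "part xs i = part xs k" "i \<noteq> k"
    then show False
      using strict_partition_part_less[OF assms, of i k] strict_partition_part_less[OF assms, of k i]
        strict_partition_part_pos[OF assms, of i] strict_partition_part_pos[OF assms, of k]
      by (cases "i < k") auto
  qed
  show "part xs ` {1..length xs} = set xs"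
  proof (intro set_eqI iffI)
    fix y assume "y \<in> part xs ` {1..length xs}"
    then show "y \<in> set xs" by (auto simp: Defs.part_def)
  next
    fix y assume "y \<in> set xs"
    then obtain k where "k < length xs" "xs ! k = y" by (auto simp: in_set_conv_nth)
    then show "y \<in> part xs ` {1..length xs}" by (intro image_eqI[of _ _ "Suc k"]) (auto simp: Defs.part_def)
  qed
qed

lemma diagram_eq_part: "diagram xs = {(i, j). 1 \<le> i \<and> i < j \<and> j \<le> i + part xs i}"
  unfolding Defs.diagram_def by (auto simp: Defs.part_def split: if_splits)

lemma finite_diagram [simp]: "finite (diagram xs)"
proof (rule finite_subset)
  show "diagram xs \<subseteq> {1..length xs} \<times> {0..length xs + sum_list xs}"
  proof
    fix b assume "b \<in> diagram xs"
    then obtain i j where "b = (i, j)" "1 \<le> i" "i \<le> length xs" "j \<le> i + part xs i"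
      unfolding Defs.diagram_def by auto
    then show "b \<in> {1..length xs} \<times> {0..length xs + sum_list xs}"
      using part_le_sum_list[of xs i] by auto
  qed
qed simp

lemma hookprod_pos: "0 < hookprod xs"
  unfolding Defs.hookprod_def by (rule prod_pos) (auto simp: Defs.hook_def split: prod.split)

section \<open>The product formula for the hook product\<close>

lemma diagram_Cons_Suc:
  "1 \<le> i \<Longrightarrow> (Suc i, Suc j) \<in> diagram (a # xs) \<longleftrightarrow> (i, j) \<in> diagram xs"
  by (simp add: diagram_eq_part part_Cons_Suc)

lemma diagram_Cons:
  "diagram (a # xs) = {(1, j) | j. 1 < j \<and> j \<le> Suc a} \<union> (\<lambda>(i, j). (Suc i, Suc j)) ` diagram xs"
proof (intro set_eqI iffI)
  fix b assume b: "b \<in> diagram (a # xs)"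
  then obtain i j where ij: "b = (i, j)" "1 \<le> i" "i < j" "j \<le> i + part (a # xs) i"
    by (auto simp: diagram_eq_part)
  show "b \<in> {(1, j) | j. 1 < j \<and> j \<le> Suc a} \<union> (\<lambda>(i, j). (Suc i, Suc j)) ` diagram xs"
  proof (cases "i = 1")
    case True then show ?thesis using ij by auto
  next
    case False
    then obtain i' j' where i': "i = Suc i'" "1 \<le> i'" and j': "j = Suc j'"
      using ij by (cases i; cases j) auto
    have "(i', j') \<in> diagram xs" using diagram_Cons_Suc[OF i'(2)] b ij i' j' by simp
    then show ?thesis using ij i' j' by (auto intro!: image_eqI[of _ _ "(i', j')"])
  qed
next
  fix b assume "b \<in> {(1, j) | j. 1 < j \<and> j \<le> Suc a} \<union> (\<lambda>(i, j). (Suc i, Suc j)) ` diagram xs"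
  then show "b \<in> diagram (a # xs)"
    by (auto simp: diagram_eq_part part_Cons_Suc)
qed

lemma hook_Cons_Suc:
  assumes ij: "(i, j) \<in> diagram xs"
  shows "hook (a # xs) (Suc i, Suc j) = hook xs (i, j)"
proof -
  have i1: "1 \<le> i" and ij': "i < j" using ij by (auto simp: diagram_eq_part)
  have arm: "{j'. (Suc i, j') \<in> diagram (a # xs) \<and> j' > Suc j}
      = Suc ` {j'. (i, j') \<in> diagram xs \<and> j' > j}"
  proof (intro set_eqI iffI)
    fix x assume x: "x \<in> {j'. (Suc i, j') \<in> diagram (a # xs) \<and> j' > Suc j}"
    then obtain x' where "x = Suc x'" by (cases x) auto
    then show "x \<in> Suc ` {j'. (i, j') \<in> diagram xs \<and> j' > j}" using x diagram_Cons_Suc[OF i1] by auto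
  qed (use diagram_Cons_Suc[OF i1] in auto)
  have leg: "{i'. (i', Suc j) \<in> diagram (a # xs) \<and> i' > Suc i}
      = Suc ` {i'. (i', j) \<in> diagram xs \<and> i' > i}"
  proof (intro set_eqI iffI)
    fix x assume x: "x \<in> {i'. (i', Suc j) \<in> diagram (a # xs) \<and> i' > Suc i}"
    then obtain x' where x': "x = Suc x'" "1 \<le> x'" using i1 by (cases x) auto
    then show "x \<in> Suc ` {i'. (i', j) \<in> diagram xs \<and> i' > i}" using x diagram_Cons_Suc by auto
  next
    fix x assume "x \<in> Suc ` {i'. (i', j) \<in> diagram xs \<and> i' > i}"
    then obtain x' where x': "x = Suc x'" "(x', j) \<in> diagram xs" "x' > i" by auto
    then show "x \<in> {i'. (i', Suc j) \<in> diagram (a # xs) \<and> i' > Suc i}"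
      using i1 diagram_Cons_Suc[of x'] by auto
  qed
  show ?thesis
    unfolding Defs.hook_def using arm leg i1 ij' by (simp add: card_image part_Cons_Suc)
qed

text \<open>The hook length of the box \<open>(1, c + 1)\<close> of \<open>a # xs\<close> when \<open>p = part xs\<close>: arm \<open>a - c\<close>,
  one box below it for each row \<open>s\<close> of \<open>xs\<close> reaching column \<open>c\<close>, and the term \<open>\<lambda>\<^sub>c\<^sub>+\<^sub>1 = p c\<close>.\<close>

definition first_row_hook :: "nat \<Rightarrow> (nat \<Rightarrow> nat) \<Rightarrow> nat \<Rightarrow> nat" where
  "first_row_hook a p c = a - c + 1 + p c + card {s. 1 \<le> s \<and> s < c \<and> c \<le> s + p s}"

lemma hook_first_row:
  assumes c: "1 \<le> c" "c \<le> a"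
  shows "hook (a # xs) (1, Suc c) = first_row_hook a (part xs) c"
proof -
  have arm: "{j'. (1, j') \<in> diagram (a # xs) \<and> j' > Suc c} = {Suc c<..Suc a}"
    by (auto simp: diagram_eq_part)
  have leg: "{i'. (i', Suc c) \<in> diagram (a # xs) \<and> i' > 1}
      = Suc ` {s. 1 \<le> s \<and> s < c \<and> c \<le> s + part xs s}"
  proof (intro set_eqI iffI)
    fix x assume x: "x \<in> {i'. (i', Suc c) \<in> diagram (a # xs) \<and> i' > 1}"
    then obtain x' where x': "x = Suc x'" "1 \<le> x'" by (cases x) auto
    then have "(x', c) \<in> diagram xs" using x diagram_Cons_Suc by auto
    then show "x \<in> Suc ` {s. 1 \<le> s \<and> s < c \<and> c \<le> s + part xs s}"
      using x' by (auto simp: diagram_eq_part)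
  next
    fix x assume "x \<in> Suc ` {s. 1 \<le> s \<and> s < c \<and> c \<le> s + part xs s}"
    then obtain x' where x': "x = Suc x'" "1 \<le> x'" "(x', c) \<in> diagram xs"
      by (auto simp: diagram_eq_part)
    then show "x \<in> {i'. (i', Suc c) \<in> diagram (a # xs) \<and> i' > 1}" using diagram_Cons_Suc by auto
  qed
  show ?thesis
    unfolding Defs.hook_def first_row_hook_def using arm leg c by (simp add: card_image part_Cons_Suc)
qed

lemma hookprod_Cons:
  "hookprod (a # xs) = (\<Prod>c\<in>{1..a}. first_row_hook a (part xs) c) * hookprod xs"
proof -
  have disj: "{(1, j) | j. 1 < j \<and> j \<le> Suc a} \<inter> (\<lambda>(i, j). (Suc i, Suc j)) ` diagram xs = {}"
    by (auto simp: diagram_eq_part)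
  have row: "{(1, j) | j. 1 < j \<and> j \<le> Suc a} = (\<lambda>c. (1::nat, Suc c)) ` {1..a}"
  proof (intro set_eqI iffI)
    fix b assume "b \<in> {(1, j) | j. 1 < j \<and> j \<le> Suc a}"
    then obtain j where "b = (1, j)" "1 < j" "j \<le> Suc a" by blast
    then show "b \<in> (\<lambda>c. (1, Suc c)) ` {1..a}" by (intro image_eqI[of _ _ "j - 1"]) auto
  qed auto
  have "hookprod (a # xs) = (\<Prod>b\<in>(\<lambda>c. (1, Suc c)) ` {1..a}. hook (a # xs) b) *
                            (\<Prod>b\<in>(\<lambda>(i, j). (Suc i, Suc j)) ` diagram xs. hook (a # xs) b)"
    unfolding Defs.hookprod_def diagram_Cons row[symmetric]
    by (rule prod.union_disjoint) (use disj in \<open>auto simp: row\<close>)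
  also have "(\<Prod>b\<in>(\<lambda>c. (1, Suc c)) ` {1..a}. hook (a # xs) b)
      = (\<Prod>c\<in>{1..a}. hook (a # xs) (1, Suc c))"
    by (subst prod.reindex) (auto simp: inj_on_def)
  also have "\<dots> = (\<Prod>c\<in>{1..a}. first_row_hook a (part xs) c)"
    by (rule prod.cong[OF refl], rule hook_first_row) auto
  also have "(\<Prod>b\<in>(\<lambda>(i, j). (Suc i, Suc j)) ` diagram xs. hook (a # xs) b) = hookprod xs"
    unfolding Defs.hookprod_def
    by (subst prod.reindex) (auto simp: inj_on_def hook_Cons_Suc intro!: prod.cong)
  finally show ?thesis .
qed


text \<open>Deleting the last row \<open>t\<close>, of length \<open>\<beta>\<close>, from the rows below the first one changes only
  the first-row hooks in columns \<open>t, \<dots>, t + \<beta>\<close>.\<close>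

lemma first_row_hook_delete_last_row:
  assumes t: "1 \<le> t" and at: "t + \<beta> \<le> a" and pt: "p t = \<beta>"
    and gap: "\<And>s. 1 \<le> s \<Longrightarrow> s < t \<Longrightarrow> t + \<beta> \<le> s + p s"
    and beyond: "\<And>s. t < s \<Longrightarrow> p s = 0"
  defines "p' \<equiv> p(t := 0)"
  shows "c < t \<or> t + \<beta> < c \<Longrightarrow> first_row_hook a p c = first_row_hook a p' c"
    and "first_row_hook a p t = a + \<beta>" "first_row_hook a p' t = a"
    and "t < c \<Longrightarrow> c \<le> t + \<beta> \<Longrightarrow> first_row_hook a p c = a - c + t + 1"
    and "t < c \<Longrightarrow> c \<le> t + \<beta> \<Longrightarrow> first_row_hook a p' c = a - c + t"
proof -
  have p': "p' s = (if s = t then 0 else p s)" for s unfolding p'_def by simp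
  show "first_row_hook a p c = first_row_hook a p' c" if c: "c < t \<or> t + \<beta> < c"
  proof -
    have "s < c \<Longrightarrow> c \<le> s + p s \<Longrightarrow> s \<noteq> t" for s using c pt by auto
    then have "{s. 1 \<le> s \<and> s < c \<and> c \<le> s + p s} = {s. 1 \<le> s \<and> s < c \<and> c \<le> s + p' s}"
      using c beyond by (auto simp: p')
    moreover have "p c = p' c" using c beyond[of c] by (auto simp: p')
    ultimately show ?thesis unfolding first_row_hook_def by simp
  qed
  have rows_above: "{s. 1 \<le> s \<and> s < t \<and> t \<le> s + q s} = {1..<t}" if "\<And>s. s < t \<Longrightarrow> q s = p s" for q
    using gap that by fastforce
  show "first_row_hook a p t = a + \<beta>" "first_row_hook a p' t = a"
    unfolding first_row_hook_def using rows_above[of p] rows_above[of p'] pt at t by (auto simp: p')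
  assume c: "t < c" "c \<le> t + \<beta>"
  have "{s. 1 \<le> s \<and> s < c \<and> c \<le> s + p s} = insert t {1..<t}"
  proof (intro set_eqI iffI)
    fix s assume "s \<in> {s. 1 \<le> s \<and> s < c \<and> c \<le> s + p s}"
    then show "s \<in> insert t {1..<t}" using beyond[of s] by (cases "t < s") auto
  next
    fix s assume "s \<in> insert t {1..<t}"
    then show "s \<in> {s. 1 \<le> s \<and> s < c \<and> c \<le> s + p s}" using gap[of s] c t pt by auto
  qed
  then show "first_row_hook a p c = a - c + t + 1"
    unfolding first_row_hook_def using c at beyond[of c] t by simp
  have "{s. 1 \<le> s \<and> s < c \<and> c \<le> s + p' s} = {1..<t}"
  proof (intro set_eqI iffI)
    fix s assume "s \<in> {s. 1 \<le> s \<and> s < c \<and> c \<le> s + p' s}"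
    then show "s \<in> {1..<t}" using beyond[of s] c by (cases "t < s") (auto simp: p' split: if_splits)
  next
    fix s assume "s \<in> {1..<t}"
    then show "s \<in> {s. 1 \<le> s \<and> s < c \<and> c \<le> s + p' s}" using gap[of s] c by (auto simp: p')
  qed
  then show "first_row_hook a p' c = a - c + t"
    unfolding first_row_hook_def using c at beyond[of c] t by (simp add: p')
qed

lemma prod_ratio_telescope:
  "\<beta> < a \<Longrightarrow> (\<Prod>k\<in>{1..\<beta>}. real (a + 1 - k) / real (a - k)) = real a / real (a - \<beta>)"
  by (induction \<beta>) auto

lemma prod_first_row_hook_delete_last_row:
  assumes t: "1 \<le> t" and at: "t + \<beta> \<le> a" and pt: "p t = \<beta>" and \<beta>: "0 < \<beta>"
    and gap: "\<And>s. 1 \<le> s \<Longrightarrow> s < t \<Longrightarrow> t + \<beta> \<le> s + p s"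
    and beyond: "\<And>s. t < s \<Longrightarrow> p s = 0"
  shows "(\<Prod>c\<in>{1..a}. real (first_row_hook a p c))
       = (\<Prod>c\<in>{1..a}. real (first_row_hook a (p(t := 0)) c)) * ((real a + real \<beta>) / (real a - real \<beta>))"
proof -
  note hooks = first_row_hook_delete_last_row[OF t at pt gap beyond]
  define h where "h c = real (first_row_hook a p c)" for c
  define h' where "h' c = real (first_row_hook a (p(t := 0)) c)" for c
  have h'_pos: "0 < h' c" for c unfolding h'_def first_row_hook_def by simp
  have "(\<Prod>c\<in>{1..a}. h c) = (\<Prod>c\<in>{1..a}. h' c * (h c / h' c))"
    using h'_pos by (intro prod.cong) (auto simp: less_imp_neq[symmetric])
  also have "\<dots> = (\<Prod>c\<in>{1..a}. h' c) * (\<Prod>c\<in>{t..t + \<beta>}. h c / h' c)"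
    unfolding prod.distrib using t at h'_pos
    by (intro arg_cong[where f = "(*) _"] prod.mono_neutral_right) (auto simp: h_def h'_def hooks(1))
  also have "(\<Prod>c\<in>{t..t + \<beta>}. h c / h' c) = h t / h' t * (\<Prod>c\<in>{Suc t..t + \<beta>}. h c / h' c)"
    by (subst prod.atLeast_Suc_atMost) auto
  also have "(\<Prod>c\<in>{Suc t..t + \<beta>}. h c / h' c) = (\<Prod>k\<in>{1..\<beta>}. real (a + 1 - k) / real (a - k))"
  proof -
    have "(\<Prod>c\<in>{Suc t..t + \<beta>}. h c / h' c) = (\<Prod>c\<in>{Suc t..t + \<beta>}. real (a - c + t + 1) / real (a - c + t))"
      by (rule prod.cong) (auto simp: h_def h'_def hooks(4,5))
    also have "\<dots> = (\<Prod>k\<in>{1..\<beta>}. real (a - (k + t) + t + 1) / real (a - (k + t) + t))"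
      using prod.shift_bounds_cl_nat_ivl[of "\<lambda>c. real (a - c + t + 1) / real (a - c + t)" 1 t \<beta>]
      by (simp add: add.commute)
    also have "\<dots> = (\<Prod>k\<in>{1..\<beta>}. real (a + 1 - k) / real (a - k))"
      by (rule prod.cong) (use at in auto)
    finally show ?thesis .
  qed
  also have "\<dots> = real a / real (a - \<beta>)" by (rule prod_ratio_telescope) (use at t in simp)
  also have "h t / h' t = real (a + \<beta>) / real a" by (simp add: h_def h'_def hooks(2,3))
  finally show ?thesis using at t \<beta> unfolding h_def h'_def by (simp add: of_nat_diff)
qed

lemma prod_first_row_hooks:
  assumes "strict_partition xs" "\<forall>y\<in>set xs. y < a"
  shows "(\<Prod>c\<in>{1..a}. real (first_row_hook a (part xs) c))
       = fact a * (\<Prod>y\<in>set xs. (real a + real y) / (real a - real y))"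
  using assms
proof (induction xs rule: rev_induct)
  case Nil
  have "(\<Prod>c\<in>{1..a}. real (first_row_hook a (part []) c)) = (\<Prod>c\<in>{1..a}. real (a + 1 - c))"
  proof (rule prod.cong[OF refl])
    fix c assume "c \<in> {1..a}"
    moreover have "{s. 1 \<le> s \<and> s < c \<and> c \<le> s + part [] s} = {}" by auto
    ultimately show "real (first_row_hook a (part []) c) = real (a + 1 - c)"
      unfolding first_row_hook_def by simp
  qed
  also have "\<dots> = (\<Prod>c\<in>{1..a}. real c)"
    by (subst prod.atLeastAtMost_rev) (auto intro: prod.cong)
  finally show ?case by (simp add: fact_prod del: part_Nil)
next
  case (snoc \<beta> xs)
  define t where "t = Suc (length xs)"
  have xs: "strict_partition xs" and above: "\<forall>y\<in>set xs. \<beta> < y" and \<beta>: "0 < \<beta>"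
    using snoc.prems(1) by (auto simp: strict_partition_append_single)
  have p: "part (xs @ [\<beta>]) = (part xs)(t := \<beta>)" unfolding t_def by (rule part_append_single)
  have p': "(part (xs @ [\<beta>]))(t := 0) = part xs"
    unfolding p t_def by (auto simp: part_beyond)
  have gap: "t + \<beta> \<le> s + part (xs @ [\<beta>]) s" if "1 \<le> s" "s \<le> t" for s
    using strict_partition_part_gap[OF snoc.prems(1) that(1), of t] that p by (simp add: t_def)
  have "part (xs @ [\<beta>]) 1 < a"
    using snoc.prems(2) by (cases xs) (auto simp: Defs.part_def)
  then have at: "t + \<beta> \<le> a" using gap[of 1] by (simp add: t_def)
  have "(\<Prod>c\<in>{1..a}. real (first_row_hook a (part (xs @ [\<beta>])) c))
      = (\<Prod>c\<in>{1..a}. real (first_row_hook a ((part (xs @ [\<beta>]))(t := 0)) c))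
        * ((real a + real \<beta>) / (real a - real \<beta>))"
  proof (rule prod_first_row_hook_delete_last_row[OF _ at _ \<beta>])
    show "t + \<beta> \<le> s + part (xs @ [\<beta>]) s" if "1 \<le> s" "s < t" for s
      using gap that by simp
    show "part (xs @ [\<beta>]) s = 0" if "t < s" for s
      using that by (simp add: p t_def part_beyond)
  qed (simp_all add: p t_def)
  also have "\<dots> = (\<Prod>c\<in>{1..a}. real (first_row_hook a (part xs) c))
        * ((real a + real \<beta>) / (real a - real \<beta>))"
    unfolding p' ..
  also have "\<dots> = fact a * (\<Prod>y\<in>set (xs @ [\<beta>]). (real a + real y) / (real a - real y))"
    using snoc.IH[OF xs] snoc.prems(2) above by auto
  finally show ?case .
qed

definition hook_product_formula :: "nat set \<Rightarrow> real" where
  "hook_product_formula S =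
     (\<Prod>x\<in>S. fact x * (\<Prod>y\<in>{y\<in>S. y < x}. (real x + real y) / (real x - real y)))"

lemma hook_product_formula_pos: "finite S \<Longrightarrow> 0 < hook_product_formula S"
  unfolding hook_product_formula_def by (intro prod_pos mult_pos_pos divide_pos_pos) auto

lemma hook_product_formula_insert:
  assumes fin: "finite S" and a: "a \<notin> S"
  shows "hook_product_formula (insert a S)
       = hook_product_formula S * fact a * (\<Prod>y\<in>S. (real a + real y) / \<bar>real a - real y\<bar>)"
proof -
  define g where "g x y = (real x + real y) / (real x - real y)" for x y :: nat
  define F where "F T x = fact x * (\<Prod>y\<in>{y\<in>T. y < x}. g x y)" for T x
  have formula_F: "hook_product_formula T = (\<Prod>x\<in>T. F T x)" for T
    unfolding hook_product_formula_def F_def g_def by simp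
  have F_new: "F (insert a S) a = fact a * (\<Prod>y\<in>S. if y < a then g a y else 1)"
  proof -
    have "{y\<in>insert a S. y < a} = {y\<in>S. y < a}" by auto
    then show ?thesis unfolding F_def using fin by (simp add: prod.inter_filter)
  qed
  have F_old: "F (insert a S) x = F S x * (if a < x then g x a else 1)" if x: "x \<in> S" for x
  proof (cases "a < x")
    case True
    then have "{y\<in>insert a S. y < x} = insert a {y\<in>S. y < x}" by auto
    then show ?thesis unfolding F_def using True fin a by (simp add: mult.commute mult.left_commute)
  next
    case False
    then have "{y\<in>insert a S. y < x} = {y\<in>S. y < x}" by auto
    then show ?thesis unfolding F_def using False by simp
  qed
  have symmetric: "(if y < a then g a y else 1) * (if a < y then g y a else 1)
      = (real a + real y) / \<bar>real a - real y\<bar>" if "y \<in> S" for y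
    using that a unfolding g_def by (cases "y < a") (auto simp: abs_if add.commute)
  have "hook_product_formula (insert a S) = F (insert a S) a * (\<Prod>x\<in>S. F (insert a S) x)"
    unfolding formula_F using fin a by simp
  also have "\<dots> = hook_product_formula S * fact a
      * (\<Prod>y\<in>S. (if y < a then g a y else 1) * (if a < y then g y a else 1))"
    unfolding F_new formula_F by (simp add: F_old prod.distrib mult_ac)
  also have "\<dots> = hook_product_formula S * fact a * (\<Prod>y\<in>S. (real a + real y) / \<bar>real a - real y\<bar>)"
    using symmetric by simp
  finally show ?thesis .
qed

lemma hookprod_Nil: "hookprod [] = 1"
proof -
  have "diagram [] = {}" by (auto simp: Defs.diagram_def)
  then show ?thesis by (simp add: Defs.hookprod_def)
qed

theorem hookprod_eq_hook_product_formula: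
  "strict_partition xs \<Longrightarrow> real (hookprod xs) = hook_product_formula (set xs)"
proof (induction xs)
  case Nil then show ?case by (simp add: hookprod_Nil hook_product_formula_def)
next
  case (Cons a xs)
  then have xs: "strict_partition xs" and below: "\<forall>y\<in>set xs. y < a"
    by (auto simp: strict_partition_Cons)
  have "real (hookprod (a # xs))
      = fact a * (\<Prod>y\<in>set xs. (real a + real y) / (real a - real y)) * real (hookprod xs)"
    using prod_first_row_hooks[OF xs below] by (simp add: hookprod_Cons)
  also have "(\<Prod>y\<in>set xs. (real a + real y) / (real a - real y))
      = (\<Prod>y\<in>set xs. (real a + real y) / \<bar>real a - real y\<bar>)"
    by (rule prod.cong) (use below in auto)
  moreover have "a \<notin> set xs" using below by blast
  ultimately show ?case
    using Cons.IH[OF xs] hook_product_formula_insert[of "set xs" a] by (simp add: mult_ac)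
qed

section \<open>Removing the entry 1 from a standard tableau\<close>

definition minimal_box :: "(nat \<times> nat) set \<Rightarrow> nat \<times> nat \<Rightarrow> bool" where
  "minimal_box S b \<longleftrightarrow> b \<in> S \<and> (\<forall>j'. (fst b, j') \<in> S \<longrightarrow> \<not> j' < snd b)
                             \<and> (\<forall>i'. (i', snd b) \<in> S \<longrightarrow> \<not> i' < fst b)"

lemma
  assumes "T \<in> standard_tableaux S"
  shows standard_tableaux_bij: "bij_betw T S {1..card S}"
    and standard_tableaux_outside: "c \<notin> S \<Longrightarrow> T c = 0"
    and standard_tableaux_row: "(i, j) \<in> S \<Longrightarrow> (i, j') \<in> S \<Longrightarrow> j < j' \<Longrightarrow> T (i, j) < T (i, j')"
    and standard_tableaux_col: "(i, j) \<in> S \<Longrightarrow> (i', j) \<in> S \<Longrightarrow> i < i' \<Longrightarrow> T (i, j) < T (i', j)"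
  using assms unfolding Defs.standard_tableaux_def by blast+

lemma standard_tableaux_pos: "T \<in> standard_tableaux S \<Longrightarrow> c \<in> S \<Longrightarrow> 1 \<le> T c"
  using bij_betwE[OF standard_tableaux_bij] by fastforce

lemma standard_tableauxI:
  assumes "bij_betw T S {1..card S}" "\<And>c. c \<notin> S \<Longrightarrow> T c = 0"
    "\<And>i j j'. (i, j) \<in> S \<Longrightarrow> (i, j') \<in> S \<Longrightarrow> j < j' \<Longrightarrow> T (i, j) < T (i, j')"
    "\<And>i i' j. (i, j) \<in> S \<Longrightarrow> (i', j) \<in> S \<Longrightarrow> i < i' \<Longrightarrow> T (i, j) < T (i', j)"
  shows "T \<in> standard_tableaux S"
  unfolding Defs.standard_tableaux_def using assms by blast

lemma finite_standard_tableaux: "finite S \<Longrightarrow> finite (standard_tableaux S)"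
proof -
  assume fin: "finite S"
  have "standard_tableaux S \<subseteq> {f. \<forall>x. (x \<in> S \<longrightarrow> f x \<in> {1..card S}) \<and> (x \<notin> S \<longrightarrow> f x = 0)}"
    unfolding Defs.standard_tableaux_def by (auto dest: bij_betwE)
  then show ?thesis by (rule finite_subset) (rule finite_set_of_finite_funs, use fin in auto)
qed

lemma standard_tableaux_empty: "standard_tableaux {} = {\<lambda>_. 0}"
  unfolding Defs.standard_tableaux_def by (auto simp: bij_betw_def)

lemma minimal_box_if_entry_one:
  assumes T: "T \<in> standard_tableaux S" and b: "b \<in> S" "T b = 1"
  shows "minimal_box S b"
  using standard_tableaux_row[OF T, of "fst b" _ "snd b"] standard_tableaux_col[OF T, of _ "snd b" "fst b"]
    standard_tableaux_pos[OF T] b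
  unfolding minimal_box_def by (metis less_one not_le prod.collapse)

definition tableau_delete_one :: "(nat \<times> nat) set \<Rightarrow> nat \<times> nat \<Rightarrow> (nat \<times> nat \<Rightarrow> nat) \<Rightarrow> nat \<times> nat \<Rightarrow> nat" where
  "tableau_delete_one S b T c = (if c \<in> S - {b} then T c - 1 else 0)"

definition tableau_insert_one :: "(nat \<times> nat) set \<Rightarrow> nat \<times> nat \<Rightarrow> (nat \<times> nat \<Rightarrow> nat) \<Rightarrow> nat \<times> nat \<Rightarrow> nat" where
  "tableau_insert_one S b T c = (if c = b then 1 else if c \<in> S then T c + 1 else 0)"

lemma tableau_delete_one_standard:
  assumes fin: "finite S" and T: "T \<in> standard_tableaux S" and b: "b \<in> S" "T b = 1"
  shows "tableau_delete_one S b T \<in> standard_tableaux (S - {b})"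
proof -
  define T' where "T' = tableau_delete_one S b T"
  have bij: "bij_betw T S {1..card S}" by (rule standard_tableaux_bij[OF T])
  have injT: "inj_on T S" using bij by (rule bij_betw_imp_inj_on)
  have ge2: "2 \<le> T c" if "c \<in> S - {b}" for c
  proof -
    have "T c \<noteq> T b" using injT that b by (metis DiffE inj_onD singletonI)
    then show ?thesis using standard_tableaux_pos[OF T, of c] that b by simp
  qed
  have inj: "inj_on T' (S - {b})"
  proof (rule inj_onI)
    fix x y assume xy: "x \<in> S - {b}" "y \<in> S - {b}" "T' x = T' y"
    then have "T x = T y" using ge2[OF xy(1)] ge2[OF xy(2)] unfolding T'_def tableau_delete_one_def by simp
    then show "x = y" using injT xy by (meson DiffD1 inj_onD)
  qed
  have "T ` (S - {b}) = T ` S - T ` {b}" by (rule inj_on_image_set_diff[OF injT]) (use b in auto)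
  then have img: "T ` (S - {b}) = {1..card S} - {1}" using bij_betw_imp_surj_on[OF bij] b by simp
  have "T' ` (S - {b}) = (\<lambda>v. v - 1) ` (T ` (S - {b}))"
    unfolding T'_def tableau_delete_one_def by (auto simp: image_image)
  also have "\<dots> = {1..card (S - {b})}"
  proof (intro set_eqI iffI)
    fix v assume "v \<in> (\<lambda>v. v - 1) ` (T ` (S - {b}))"
    then show "v \<in> {1..card (S - {b})}" using fin b unfolding img by auto
  next
    fix v assume "v \<in> {1..card (S - {b})}"
    then have "v + 1 \<in> T ` (S - {b})" using fin b unfolding img by auto
    then show "v \<in> (\<lambda>v. v - 1) ` (T ` (S - {b}))" by (intro image_eqI[of _ _ "v + 1"]) auto
  qed
  finally have "bij_betw T' (S - {b}) {1..card (S - {b})}"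
    unfolding bij_betw_def using inj by simp
  then have "T' \<in> standard_tableaux (S - {b})"
  proof (rule standard_tableauxI)
    fix c assume "c \<notin> S - {b}"
    then show "T' c = 0" unfolding T'_def tableau_delete_one_def by (simp del: Diff_iff)
  next
    fix i j j' assume that: "(i, j) \<in> S - {b}" "(i, j') \<in> S - {b}" "j < j'"
    then show "T' (i, j) < T' (i, j')"
      using standard_tableaux_row[OF T, of i j j'] ge2[OF that(1)]
      unfolding T'_def tableau_delete_one_def by simp
  next
    fix i i' j assume that: "(i, j) \<in> S - {b}" "(i', j) \<in> S - {b}" "i < i'"
    then show "T' (i, j) < T' (i', j)"
      using standard_tableaux_col[OF T, of i j i'] ge2[OF that(1)]
      unfolding T'_def tableau_delete_one_def by simp
  qed
  then show ?thesis unfolding T'_def .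
qed

lemma tableau_insert_one_standard:
  assumes fin: "finite S" and mb: "minimal_box S b" and T': "T' \<in> standard_tableaux (S - {b})"
  shows "tableau_insert_one S b T' \<in> standard_tableaux S"
proof -
  define T where "T = tableau_insert_one S b T'"
  have bS: "b \<in> S" using mb by (simp add: minimal_box_def)
  have bij': "bij_betw T' (S - {b}) {1..card S - 1}"
    using standard_tableaux_bij[OF T'] fin bS by simp
  have T_b: "T b = 1" unfolding T_def tableau_insert_one_def by simp
  have T_other: "T c = T' c + 1" if "c \<in> S - {b}" for c
    using that unfolding T_def tableau_insert_one_def by auto
  have "inj_on T (S - {b})"
    using bij_betw_imp_inj_on[OF bij'] by (simp add: inj_on_def T_other)
  moreover have "T b \<notin> T ` (S - {b})"
    using T_b T_other standard_tableaux_pos[OF T'] by force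
  ultimately have "inj_on T (insert b (S - {b}))" unfolding inj_on_insert Diff_idemp ..
  then have inj: "inj_on T S" by (simp only: insert_Diff[OF bS])
  have "T ` (S - {b}) = Suc ` (T' ` (S - {b}))"
    unfolding image_image using T_other by (intro image_cong) auto
  then have "T ` (S - {b}) = Suc ` {1..card S - 1}"
    using bij_betw_imp_surj_on[OF bij'] by simp
  also have "\<dots> = {Suc 1..card S}"
    using fin bS card_gt_0_iff[of S] by (auto simp: image_Suc_atLeastAtMost)
  finally have "T ` (S - {b}) = {Suc 1..card S}" .
  then have "T ` S = insert 1 {Suc 1..card S}"
    using T_b insert_Diff[OF bS] by (metis image_insert)
  also have "\<dots> = {1..card S}"
    using fin bS by (intro atLeastAtMost_insertL) (auto simp: Suc_le_eq card_gt_0_iff)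
  finally have bij: "bij_betw T S {1..card S}" unfolding bij_betw_def using inj by simp
  have not_b: "c \<noteq> b" if "(i, j) \<in> S" "c \<in> S" "c = (i', j') " "(i < i' \<and> j = j') \<or> (i = i' \<and> j < j')"
    for i j i' j' c
    using mb that unfolding minimal_box_def by auto
  have "T \<in> standard_tableaux S"
  proof (rule standard_tableauxI[OF bij])
    fix c assume "c \<notin> S"
    then show "T c = 0" using bS unfolding T_def tableau_insert_one_def by auto
  next
    fix i j j' assume that: "(i, j) \<in> S" "(i, j') \<in> S" "j < j'"
    then show "T (i, j) < T (i, j')"
      using standard_tableaux_row[OF T', of i j j'] not_b[OF that(1,2) refl]
        standard_tableaux_pos[OF T', of "(i, j')"]
      unfolding T_def tableau_insert_one_def by auto
  next
    fix i i' j assume that: "(i, j) \<in> S" "(i', j) \<in> S" "i < i'"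
    then show "T (i, j) < T (i', j)"
      using standard_tableaux_col[OF T', of i j i'] not_b[OF that(1,2) refl]
        standard_tableaux_pos[OF T', of "(i', j)"]
      unfolding T_def tableau_insert_one_def by auto
  qed
  then show ?thesis unfolding T_def .
qed

lemma card_standard_tableaux_entry_one:
  assumes fin: "finite S" and mb: "minimal_box S b"
  shows "card {T \<in> standard_tableaux S. T b = 1} = card (standard_tableaux (S - {b}))"
proof (rule bij_betw_same_card[of "tableau_delete_one S b"],
       rule bij_betw_byWitness[where f' = "tableau_insert_one S b"])
  have bS: "b \<in> S" using mb by (simp add: minimal_box_def)
  show "\<forall>T\<in>{T \<in> standard_tableaux S. T b = 1}. tableau_insert_one S b (tableau_delete_one S b T) = T"
  proof (intro ballI ext)
    fix T c assume T: "T \<in> {T \<in> standard_tableaux S. T b = 1}"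
    then show "tableau_insert_one S b (tableau_delete_one S b T) c = T c"
      using standard_tableaux_outside[of T S c] standard_tableaux_pos[of T S c] bS
      by (auto simp: tableau_insert_one_def tableau_delete_one_def)
  qed
  show "\<forall>T\<in>standard_tableaux (S - {b}). tableau_delete_one S b (tableau_insert_one S b T) = T"
    using standard_tableaux_outside
    by (auto simp: tableau_insert_one_def tableau_delete_one_def fun_eq_iff)
  show "tableau_delete_one S b ` {T \<in> standard_tableaux S. T b = 1} \<subseteq> standard_tableaux (S - {b})"
    using tableau_delete_one_standard[OF fin _ bS] by blast
  show "tableau_insert_one S b ` standard_tableaux (S - {b}) \<subseteq> {T \<in> standard_tableaux S. T b = 1}"
    using tableau_insert_one_standard[OF fin mb] by (auto simp: tableau_insert_one_def)
qed

theorem card_standard_tableaux_remove_minimal: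
  assumes fin: "finite S" and ne: "S \<noteq> {}"
  shows "card (standard_tableaux S) = (\<Sum>b\<in>{b. minimal_box S b}. card (standard_tableaux (S - {b})))"
proof -
  define fiber where "fiber b = {T \<in> standard_tableaux S. T b = 1}" for b
  have "standard_tableaux S = (\<Union>b\<in>S. fiber b)"
  proof (intro set_eqI iffI)
    fix T assume T: "T \<in> standard_tableaux S"
    have "1 \<in> {1..card S}" using fin ne by (simp add: Suc_leI card_gt_0_iff)
    then obtain b where "b \<in> S" "T b = 1"
      using bij_betw_imp_surj_on[OF standard_tableaux_bij[OF T]] by (metis imageE)
    then show "T \<in> (\<Union>b\<in>S. fiber b)" using T unfolding fiber_def by blast
  qed (auto simp: fiber_def)
  then have "card (standard_tableaux S) = (\<Sum>b\<in>S. card (fiber b))"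
  proof (simp only:, intro card_UN_disjoint ballI impI)
    show "finite (fiber b)" for b using finite_standard_tableaux[OF fin] by (simp add: fiber_def)
    show "fiber b \<inter> fiber b' = {}" if "b \<in> S" "b' \<in> S" "b \<noteq> b'" for b b'
    proof (rule equals0I)
      fix T assume "T \<in> fiber b \<inter> fiber b'"
      then have "inj_on T S" "T b = T b'"
        unfolding fiber_def using bij_betw_imp_inj_on[OF standard_tableaux_bij] by auto
      then show False using that by (meson inj_onD)
    qed
  qed (rule fin)
  also have "\<dots> = (\<Sum>b\<in>{b. minimal_box S b}. card (fiber b))"
  proof (rule sum.mono_neutral_right[OF fin])
    show "{b. minimal_box S b} \<subseteq> S" by (auto simp: minimal_box_def)
    show "\<forall>b\<in>S - {b. minimal_box S b}. card (fiber b) = 0"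
    proof
      fix b assume "b \<in> S - {b. minimal_box S b}"
      then have "fiber b = {}" using minimal_box_if_entry_one unfolding fiber_def by blast
      then show "card (fiber b) = 0" by (simp only: card.empty)
    qed
  qed
  also have "\<dots> = (\<Sum>b\<in>{b. minimal_box S b}. card (standard_tableaux (S - {b})))"
    unfolding fiber_def by (rule sum.cong[OF refl], rule card_standard_tableaux_entry_one[OF fin]) simp
  finally show ?thesis .
qed

section \<open>Adding one box to a strict partition\<close>

text \<open>Rows are counted from 1; adding a box in row \<open>length mu + 1\<close> opens a new row.\<close>

definition add_box :: "nat list \<Rightarrow> nat \<Rightarrow> nat list" where
  "add_box mu i = (if i \<le> length mu then mu[i - 1 := mu ! (i - 1) + 1] else mu @ [1])"

definition addable_rows :: "nat list \<Rightarrow> nat set" where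
  "addable_rows mu = {i. 1 \<le> i \<and> i \<le> Suc (length mu) \<and> strict_partition (add_box mu i)}"

lemma finite_addable_rows: "finite (addable_rows mu)"
  by (rule finite_subset[of _ "{1..Suc (length mu)}"]) (auto simp: addable_rows_def)

lemma addable_rowsD: "i \<in> addable_rows mu \<Longrightarrow> 1 \<le> i \<and> i \<le> Suc (length mu)"
  by (simp add: addable_rows_def)

lemma part_add_box:
  assumes "1 \<le> i" "i \<le> Suc (length mu)"
  shows "part (add_box mu i) = (part mu)(i := Suc (part mu i))"
proof
  fix k
  show "part (add_box mu i) k = ((part mu)(i := Suc (part mu i))) k"
    using assms by (cases "k = i")
      (auto simp: add_box_def Defs.part_def nth_list_update nth_append not_le)
qed

lemma length_add_box: "1 \<le> i \<Longrightarrow> i \<le> Suc (length mu) \<Longrightarrow> length (add_box mu i) = max (length mu) i"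
  by (auto simp: add_box_def)

lemma diagram_add_box:
  assumes "1 \<le> i" "i \<le> Suc (length mu)"
  shows "diagram (add_box mu i) = insert (i, i + part mu i + 1) (diagram mu)"
  using assms unfolding diagram_eq_part part_add_box[OF assms] by (auto split: if_splits)

lemma psize_add_box:
  assumes i: "1 \<le> i" "i \<le> Suc (length mu)"
  shows "psize (add_box mu i) = psize mu + 1"
proof -
  define N where "N = Suc (length mu)"
  have iN: "i \<in> {1..N}" using i unfolding N_def by simp
  have "psize (add_box mu i) = (\<Sum>k=1..N. ((part mu)(i := Suc (part mu i))) k)"
    using psize_eq_sum_part[of "add_box mu i" N] length_add_box[OF i] i
    by (simp add: N_def part_add_box[OF i])
  also have "\<dots> = Suc (part mu i) + (\<Sum>k\<in>{1..N} - {i}. part mu k)"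
    by (subst sum.remove[OF _ iN]) (auto intro!: sum.cong)
  moreover have "psize mu = part mu i + (\<Sum>k\<in>{1..N} - {i}. part mu k)"
    using psize_eq_sum_part[of mu N] sum.remove[OF _ iN, of "part mu"] by (simp add: N_def)
  ultimately show ?thesis by simp
qed

lemma strict_partition_add_box:
  assumes mu: "strict_partition mu" and i: "1 \<le> i" "i \<le> Suc (length mu)"
    and gap: "2 \<le> i \<longrightarrow> part mu i + 2 \<le> part mu (i - 1)"
  shows "strict_partition (add_box mu i)"
  unfolding strict_partition_iff_part part_add_box[OF i] length_add_box[OF i]
proof (intro conjI allI impI)
  fix k assume k: "1 \<le> k \<and> k \<le> max (length mu) i"
  show "0 < ((part mu)(i := Suc (part mu i))) k"
  proof (cases "k = i")
    case False
    then have "k \<le> length mu" using k i(2) by (auto simp: max_def split: if_splits)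
    then show ?thesis using False strict_partition_part_pos[OF mu, of k] k by simp
  qed simp
next
  fix k assume k: "1 \<le> k \<and> Suc k \<le> max (length mu) i"
  consider "Suc k = i" | "k = i" | "Suc k \<noteq> i" "k \<noteq> i" by blast
  then show "((part mu)(i := Suc (part mu i))) (Suc k) < ((part mu)(i := Suc (part mu i))) k"
  proof cases
    case 1 then show ?thesis using gap k by auto
  next
    case 2 then show ?thesis using strict_partition_part_less[OF mu, of k "Suc k"] k by auto
  next
    case 3
    then have "Suc k \<le> length mu" using k i(2) by (auto simp: max_def split: if_splits)
    then show ?thesis using strict_partition_part_Suc_less[OF mu, of k] k 3 by simp
  qed
qed

lemma addable_rows_iff:
  assumes mu: "strict_partition mu" and i: "1 \<le> i" "i \<le> Suc (length mu)"
  shows "i \<in> addable_rows mu \<longleftrightarrow> (2 \<le> i \<longrightarrow> part mu i + 2 \<le> part mu (i - 1))"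
proof
  assume "i \<in> addable_rows mu"
  then have sa: "strict_partition (add_box mu i)" unfolding addable_rows_def by simp
  show "2 \<le> i \<longrightarrow> part mu i + 2 \<le> part mu (i - 1)"
  proof
    assume i2: "2 \<le> i"
    have "Suc (i - 1) \<le> length (add_box mu i)" using i length_add_box[OF i] i2 by simp
    then have "part (add_box mu i) i < part (add_box mu i) (i - 1)"
      using strict_partition_part_Suc_less[OF sa, of "i - 1"] i2 by simp
    moreover have "i - 1 \<noteq> i" using i2 by simp
    ultimately show "part mu i + 2 \<le> part mu (i - 1)" using part_add_box[OF i] by simp
  qed
next
  assume "2 \<le> i \<longrightarrow> part mu i + 2 \<le> part mu (i - 1)"
  then show "i \<in> addable_rows mu" unfolding addable_rows_def using strict_partition_add_box[OF mu i] i by simp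
qed

lemma contains_trans: "contains a b \<Longrightarrow> contains b c \<Longrightarrow> contains a c"
  unfolding Defs.contains_def by (meson le_trans)

lemma contains_add_box: "1 \<le> i \<Longrightarrow> i \<le> Suc (length mu) \<Longrightarrow> contains (add_box mu i) mu"
  unfolding Defs.contains_def by (simp add: part_add_box)

lemma contains_add_box_iff:
  assumes "1 \<le> i" "i \<le> Suc (length mu)"
  shows "contains lam (add_box mu i) \<longleftrightarrow> contains lam mu \<and> Suc (part mu i) \<le> part lam i"
proof
  assume "contains lam (add_box mu i)"
  then have le: "((part mu)(i := Suc (part mu i))) k \<le> part lam k" for k
    unfolding Defs.contains_def part_add_box[OF assms] by blast
  have "part mu k \<le> part lam k" for k using le[of k] le[of i] by (cases "k = i") auto
  then show "contains lam mu \<and> Suc (part mu i) \<le> part lam i"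
    unfolding Defs.contains_def using le[of i] by simp
qed (auto simp: Defs.contains_def part_add_box[OF assms])

lemma minimal_box_skew_imp_add_box:
  assumes lam: "strict_partition lam" and mu: "strict_partition mu" and c: "contains lam mu"
    and mb: "minimal_box (skew lam mu) (i, j)"
  shows "i \<in> addable_rows mu" "contains lam (add_box mu i)" "j = i + part mu i + 1"
proof -
  have inL: "1 \<le> i" "i < j" "j \<le> i + part lam i" and notM: "\<not> j \<le> i + part mu i"
    using mb unfolding minimal_box_def Defs.skew_def diagram_eq_part by auto
  have row: "\<not> j' < j" if "(i, j') \<in> skew lam mu" for j' using mb that unfolding minimal_box_def by simp
  have col: "\<not> i' < i" if "(i', j) \<in> skew lam mu" for i' using mb that unfolding minimal_box_def by simp
  show j: "j = i + part mu i + 1"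
  proof (rule ccontr)
    assume "j \<noteq> i + part mu i + 1"
    then have "(i, j - 1) \<in> skew lam mu" using inL notM unfolding Defs.skew_def diagram_eq_part by auto
    then show False using row[of "j - 1"] inL by simp
  qed
  have lm: "Suc (part mu i) \<le> part lam i" using inL j by simp
  have gap: "part mu i + 2 \<le> part mu (i - 1)" if i2: "2 \<le> i"
  proof -
    have "part lam i < part lam (i - 1)"
      using strict_partition_part_less[OF lam, of "i - 1" i] i2 lm by auto
    then have "(i - 1, j) \<in> diagram lam" using i2 j lm unfolding diagram_eq_part by auto
    moreover have "(i - 1, j) \<notin> skew lam mu" using col[of "i - 1"] i2 by auto
    ultimately have "(i - 1, j) \<in> diagram mu" unfolding Defs.skew_def by auto
    then show ?thesis using j i2 unfolding diagram_eq_part by auto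
  qed
  have ilen: "i \<le> Suc (length mu)"
  proof (rule ccontr)
    assume "\<not> i \<le> Suc (length mu)"
    then have "2 \<le> i" "length mu < i - 1" by auto
    then show False using gap part_beyond[of mu "i - 1"] by simp
  qed
  show "i \<in> addable_rows mu" using addable_rows_iff[OF mu inL(1) ilen] gap by simp
  show "contains lam (add_box mu i)" using contains_add_box_iff[OF inL(1) ilen] c lm by simp
qed

lemma add_box_minimal_box_skew:
  assumes mu: "strict_partition mu" and i: "i \<in> addable_rows mu" and c: "contains lam (add_box mu i)"
  shows "minimal_box (skew lam mu) (i, i + part mu i + 1)"
proof -
  have i1: "1 \<le> i" "i \<le> Suc (length mu)" using addable_rowsD[OF i] by auto
  have lm: "Suc (part mu i) \<le> part lam i" using contains_add_box_iff[OF i1] c by simp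
  have gap: "part mu i + 2 \<le> part mu (i - 1)" if "2 \<le> i"
    using addable_rows_iff[OF mu i1] i that by simp
  have col: "\<not> i' < i" if i': "(i', i + part mu i + 1) \<in> skew lam mu" for i'
  proof
    assume lt: "i' < i"
    have i'1: "1 \<le> i'" and nm: "\<not> i + part mu i + 1 \<le> i' + part mu i'"
      using i' unfolding Defs.skew_def diagram_eq_part by auto
    have i2: "2 \<le> i" using lt i'1 by simp
    have il: "i - 1 \<le> length mu"
      using gap[OF i2] part_beyond[of mu "i - 1"] by (cases "i - 1 \<le> length mu") auto
    have "part mu (i - 1) + (i - 1 - i') \<le> part mu i'"
      using strict_partition_part_gap[OF mu i'1 _ il] lt by simp
    then show False using nm gap[OF i2] lt by simp
  qed
  show ?thesis
    unfolding minimal_box_def using i1 lm col by (auto simp: Defs.skew_def diagram_eq_part)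
qed

lemma skew_nonempty:
  assumes c: "contains lam mu" and sz: "psize mu < psize lam"
  shows "skew lam mu \<noteq> {}"
proof
  assume empty: "skew lam mu = {}"
  have "part lam i \<le> part mu i" for i
  proof (rule ccontr)
    assume "\<not> part lam i \<le> part mu i"
    moreover then have "1 \<le> i" by (cases i) auto
    ultimately have "(i, i + part lam i) \<in> skew lam mu" unfolding Defs.skew_def diagram_eq_part by auto
    then show False using empty by simp
  qed
  then have "(\<Sum>i=1..max (length lam) (length mu). part lam i) \<le> (\<Sum>i=1..max (length lam) (length mu). part mu i)"
    by (intro sum_mono)
  then show False
    using sz psize_eq_sum_part[of lam "max (length lam) (length mu)"]
      psize_eq_sum_part[of mu "max (length lam) (length mu)"] by simp
qed

theorem num_syt_remove_minimal:
  assumes lam: "strict_partition lam" and mu: "strict_partition mu" and c: "contains lam mu"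
    and sz: "psize mu < psize lam"
  shows "num_syt lam mu = (\<Sum>i\<in>{i \<in> addable_rows mu. contains lam (add_box mu i)}. num_syt lam (add_box mu i))"
proof -
  define I where "I = {i \<in> addable_rows mu. contains lam (add_box mu i)}"
  have minimal: "{b. minimal_box (skew lam mu) b} = (\<lambda>i. (i, i + part mu i + 1)) ` I"
    using minimal_box_skew_imp_add_box[OF lam mu c] add_box_minimal_box_skew[OF mu]
    unfolding I_def by fastforce
  have "num_syt lam mu = (\<Sum>b\<in>{b. minimal_box (skew lam mu) b}. card (standard_tableaux (skew lam mu - {b})))"
    unfolding Defs.num_syt_def
    by (rule card_standard_tableaux_remove_minimal) (use skew_nonempty[OF c sz] in \<open>simp_all add: Defs.skew_def\<close>)
  also have "\<dots> = (\<Sum>i\<in>I. card (standard_tableaux (skew lam mu - {(i, i + part mu i + 1)})))"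
    unfolding minimal by (subst sum.reindex) (auto simp: inj_on_def)
  also have "\<dots> = (\<Sum>i\<in>I. num_syt lam (add_box mu i))"
  proof (rule sum.cong[OF refl])
    fix i assume "i \<in> I"
    then have i1: "1 \<le> i" "i \<le> Suc (length mu)" using addable_rowsD unfolding I_def by auto
    have "skew lam mu - {(i, i + part mu i + 1)} = skew lam (add_box mu i)"
      unfolding Defs.skew_def diagram_add_box[OF i1] by auto
    then show "card (standard_tableaux (skew lam mu - {(i, i + part mu i + 1)})) = num_syt lam (add_box mu i)"
      by (simp add: Defs.num_syt_def)
  qed
  finally show ?thesis unfolding I_def .
qed

section \<open>The weights of one-box extensions\<close>

definition weight :: "nat list \<Rightarrow> nat list \<Rightarrow> real" where
  "weight lam mu = (2::real) powi (int (psize lam) - int (plen lam) - int (psize mu) + int (plen mu))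
                   * real (hookprod mu) / real (hookprod lam)"

definition content_binom_sum :: "nat list \<Rightarrow> real" where
  "content_binom_sum lam = (\<Sum>b\<in>diagram lam. (real_of_int (content b) gchoose 2))"

lemma weight_self: "weight mu mu = 1"
  using hookprod_pos[of mu] unfolding weight_def by simp

lemma weight_trans: "weight lam mu = weight lam nu * weight nu mu"
proof -
  have e: "int (psize lam) - int (plen lam) - int (psize mu) + int (plen mu) =
      (int (psize lam) - int (plen lam) - int (psize nu) + int (plen nu)) +
      (int (psize nu) - int (plen nu) - int (psize mu) + int (plen mu))" by simp
  have "real (hookprod nu) \<noteq> 0" using hookprod_pos[of nu] by simp
  then show ?thesis
    unfolding weight_def e power_int_add[of "2::real", OF disjI1, OF zero_neq_numeral[symmetric]]
    by simp
qed

lemma content_binom_sum_add_box: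
  assumes i: "1 \<le> i" "i \<le> Suc (length mu)"
  shows "content_binom_sum (add_box mu i) - content_binom_sum mu = pronic (part mu i) / 2"
proof -
  have "(i, i + part mu i + 1) \<notin> diagram mu" by (auto simp: diagram_eq_part)
  then have "content_binom_sum (add_box mu i) - content_binom_sum mu
      = real_of_int (content (i, i + part mu i + 1)) gchoose 2"
    unfolding content_binom_sum_def diagram_add_box[OF i] by simp
  also have "\<dots> = (real (part mu i) + 1) gchoose 2" by (simp add: Defs.content_def add.commute)
  also have "\<dots> = pronic (part mu i) / 2"
    by (simp add: gbinomial_prod_rev numeral_2_eq_2 pronic_def)
  finally show ?thesis .
qed

lemma set_add_box_existing_row:
  assumes mu: "strict_partition mu" and i: "1 \<le> i" "i \<le> length mu"
  shows "set (add_box mu i) = insert (Suc (part mu i)) (set mu - {part mu i})"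
proof -
  have "set (add_box mu i) = set (mu[i - 1 := mu ! (i - 1) + 1])" using i by (simp add: add_box_def)
  also have "\<dots> = insert (mu ! (i - 1) + 1) (set mu - {mu ! (i - 1)})"
    by (rule set_update_distinct) (use strict_partition_distinct[OF mu] i in auto)
  finally show ?thesis using i by (simp add: Defs.part_def)
qed

lemma set_add_box_new_row: "set (add_box mu (Suc (length mu))) = insert 1 (set mu)"
  by (simp add: add_box_def)

text \<open>The ratio of the two hook-formula factors contributed by a part \<open>y\<close> before and after a
  part \<open>x\<close> grows to \<open>x + 1\<close>, in the variables of the interpolation identities.\<close>

lemma hook_factor_ratio:
  assumes "y \<noteq> x" "y \<noteq> Suc x"
  shows "((real x + real y) / \<bar>real x - real y\<bar>) / ((real (Suc x) + real y) / \<bar>real (Suc x) - real y\<bar>)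
       = (pronic x - pronic_prev y) / (pronic x - pronic y)"
proof -
  define a c where "a = real x" and "c = real y"
  have num: "pronic x - pronic_prev y = (a + c) * (a + 1 - c)"
    unfolding pronic_def pronic_prev_def a_def c_def by (simp add: algebra_simps)
  have den: "pronic x - pronic y = (a - c) * (a + c + 1)"
    unfolding pronic_def a_def c_def by (simp add: algebra_simps)
  have "a \<noteq> c" "a + 1 \<noteq> c" and pos: "0 \<le> a" "0 \<le> c"
    using assms unfolding a_def c_def by auto
  then consider "c < a" | "1 + a < c"
    using assms unfolding a_def c_def by fastforce
  then have "(a + c) / \<bar>a - c\<bar> / ((1 + a + c) / \<bar>1 + a - c\<bar>) = (a + c) * (a + 1 - c) / ((a - c) * (a + c + 1))"
  proof cases
    case 1
    then show ?thesis using pos by (simp add: field_simps abs_if)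
  next
    case 2
    then have "\<bar>a - c\<bar> = c - a" "\<bar>1 + a - c\<bar> = c - 1 - a" by auto
    moreover have "c - a \<noteq> 0" "a + c + 1 \<noteq> 0" "c - 1 - a \<noteq> 0" "1 + a + c \<noteq> 0" using 2 pos by auto
    ultimately show ?thesis by (simp add: divide_simps) (simp add: algebra_simps)
  qed
  then show ?thesis unfolding num den a_def c_def by simp
qed

lemma weight_add_box_existing_row:
  assumes mu: "strict_partition mu" and i: "i \<in> addable_rows mu" and il: "i \<le> length mu"
  shows "weight (add_box mu i) mu = corner_weight (set mu) (part mu i)"
proof -
  have i1: "1 \<le> i" "i \<le> Suc (length mu)" using addable_rowsD[OF i] by auto
  have sa: "strict_partition (add_box mu i)" using i unfolding addable_rows_def by simp
  define x where "x = part mu i"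
  define S where "S = set mu - {x}"
  have "x \<in> set mu" using image_part[OF mu] i1 il unfolding x_def by auto
  then have X: "set mu = insert x S" and xS: "x \<notin> S" and fin: "finite S" unfolding S_def by auto
  have "Suc x \<notin> set mu"
  proof
    assume "Suc x \<in> set mu"
    then obtain k where k: "k \<in> {1..length mu}" "part mu k = Suc x"
      using image_part[OF mu] by (metis imageE)
    consider "i < k" | "k < i" using k x_def by fastforce
    then show False
    proof cases
      case 1 then show False using strict_partition_part_less[OF mu, of i k] k i1 x_def by auto
    next
      case 2
      then have "part mu (i - 1) \<le> part mu k" using strict_partition_part_antimono[OF mu, of k "i - 1"] k by simp
      then show False using addable_rows_iff[OF mu i1] i 2 k x_def by simp
    qed
  qed
  then have x1S: "Suc x \<notin> S" unfolding S_def by simp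
  have Y: "set (add_box mu i) = insert (Suc x) S"
    using set_add_box_existing_row[OF mu i1(1) il] unfolding S_def x_def by simp
  have exponent: "int (psize (add_box mu i)) - int (plen (add_box mu i)) - int (psize mu) + int (plen mu) = 1"
    using psize_add_box[OF i1] length_add_box[OF i1] il by (simp add: Defs.plen_def)
  have "weight (add_box mu i) mu
      = 2 * (hook_product_formula (insert x S) / hook_product_formula (insert (Suc x) S))"
    unfolding weight_def exponent
    using hookprod_eq_hook_product_formula[OF mu] hookprod_eq_hook_product_formula[OF sa] X Y by simp
  also have "\<dots> = 2 / (real x + 1) * ((\<Prod>y\<in>S. (real x + real y) / \<bar>real x - real y\<bar>) /
                            (\<Prod>y\<in>S. (real (Suc x) + real y) / \<bar>real (Suc x) - real y\<bar>))"
  proof -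
    have cancel: "2 * (H * f * P1 / (H * (z * f) * P2)) = 2 / z * (P1 / P2)"
      if "0 < H" "0 < f" "0 < z" for H f P1 P2 z :: real
      using that by (simp add: field_simps)
    have fact_Suc_x: "fact (Suc x) = (real x + 1) * (fact x :: real)" by (simp add: fact_Suc)
    show ?thesis
      unfolding hook_product_formula_insert[OF fin xS] hook_product_formula_insert[OF fin x1S] fact_Suc_x
      by (intro cancel) (auto intro: hook_product_formula_pos[OF fin])
  qed
  also have "\<dots> = 2 / (real x + 1) * (\<Prod>y\<in>S. (pronic x - pronic_prev y) / (pronic x - pronic y))"
    unfolding prod_dividef[symmetric]
    by (rule arg_cong[where f = "(*) _"], rule prod.cong[OF refl], rule hook_factor_ratio)
      (use xS x1S in auto)
  also have "\<dots> = corner_weight (set mu) x" unfolding corner_weight_def S_def by simp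
  finally show ?thesis unfolding x_def .
qed

lemma weight_add_box_new_row:
  assumes mu: "strict_partition mu" and i: "Suc (length mu) \<in> addable_rows mu"
  shows "weight (add_box mu (Suc (length mu))) mu = new_row_weight (set mu)"
proof -
  define X where "X = set mu"
  have i1: "1 \<le> Suc (length mu)" "Suc (length mu) \<le> Suc (length mu)" by auto
  have sa: "strict_partition (add_box mu (Suc (length mu)))" using i unfolding addable_rows_def by simp
  have fin: "finite X" unfolding X_def by simp
  have ge2: "2 \<le> y" if y: "y \<in> X" for y
  proof -
    obtain k where k: "k \<in> {1..length mu}" "part mu k = y"
      using y image_part[OF mu] unfolding X_def by (metis imageE)
    have "2 \<le> part mu (length mu)"
      using addable_rows_iff[OF mu i1] i k part_beyond[of mu "Suc (length mu)"] by auto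
    also have "\<dots> \<le> part mu k" using strict_partition_part_antimono[OF mu, of k "length mu"] k by simp
    finally show ?thesis using k by simp
  qed
  then have one: "1 \<notin> X" by force
  have exponent:
    "int (psize (add_box mu (Suc (length mu)))) - int (plen (add_box mu (Suc (length mu)))) - int (psize mu) + int (plen mu) = 0"
    using psize_add_box[OF i1] length_add_box[OF i1] by (simp add: Defs.plen_def)
  have "weight (add_box mu (Suc (length mu))) mu = hook_product_formula X / hook_product_formula (insert 1 X)"
    unfolding weight_def exponent
    using hookprod_eq_hook_product_formula[OF mu] hookprod_eq_hook_product_formula[OF sa]
      set_add_box_new_row[of mu]
    by (simp add: X_def)
  also have "\<dots> = (\<Prod>y\<in>X. 1 / ((1 + real y) / \<bar>1 - real y\<bar>))"
    unfolding hook_product_formula_insert[OF fin one]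
    using hook_product_formula_pos[OF fin] by (simp add: prod_dividef)
  also have "\<dots> = new_row_weight X"
    unfolding new_row_weight_def
  proof (rule prod.cong[OF refl])
    fix y assume "y \<in> X"
    then have y: "real y \<ge> 2" using ge2 by simp
    then have "1 / ((1 + real y) / \<bar>1 - real y\<bar>) = (real y - 1) / (real y + 1)"
      by (simp add: abs_if add.commute)
    also have "\<dots> = pronic_prev y / pronic y"
      unfolding pronic_def pronic_prev_def using y by (simp add: mult.commute)
    finally show "1 / ((1 + real y) / \<bar>1 - real y\<bar>) = pronic_prev y / pronic y" .
  qed
  finally show ?thesis unfolding X_def .
qed

lemma corner_weight_not_addable:
  assumes mu: "strict_partition mu" and i: "1 \<le> i" "i \<le> length mu" and not_addable: "i \<notin> addable_rows mu"
  shows "corner_weight (set mu) (part mu i) = 0"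
proof -
  have i2: "2 \<le> i" and lt: "part mu (i - 1) < part mu i + 2"
    using addable_rows_iff[OF mu, of i] i not_addable by auto
  have "part mu (Suc (i - 1)) < part mu (i - 1)"
    using strict_partition_part_Suc_less[OF mu, of "i - 1"] i i2 by simp
  then have eq: "part mu (i - 1) = Suc (part mu i)" using lt i2 by simp
  have "part mu (i - 1) \<in> set mu" using image_part[OF mu] i i2 by force
  then have "Suc (part mu i) \<in> set mu - {part mu i}" using eq by simp
  moreover have "pronic (part mu i) - pronic_prev (Suc (part mu i)) = 0"
    by (simp add: pronic_def pronic_prev_def)
  ultimately show ?thesis
    unfolding corner_weight_def by (auto intro!: prod_zero bexI[of _ "Suc (part mu i)"])
qed

lemma new_row_weight_not_addable:
  assumes mu: "strict_partition mu" and not_addable: "Suc (length mu) \<notin> addable_rows mu"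
  shows "new_row_weight (set mu) = 0"
proof -
  have c: "1 \<le> length mu" and lt: "part mu (length mu) < 2"
    using addable_rows_iff[OF mu, of "Suc (length mu)"] not_addable part_beyond[of mu "Suc (length mu)"]
    by auto
  have "part mu (length mu) = 1" using strict_partition_part_pos[OF mu, of "length mu"] c lt by simp
  moreover have "part mu (length mu) \<in> set mu" using image_part[OF mu] c by force
  ultimately show ?thesis
    unfolding new_row_weight_def by (intro prod_zero) (auto intro!: bexI[of _ 1] simp: pronic_prev_def)
qed

lemma sum_weight_add_box:
  assumes mu: "strict_partition mu"
  shows "(\<Sum>i\<in>addable_rows mu. weight (add_box mu i) mu * h (part mu i))
       = (\<Sum>x\<in>set mu. corner_weight (set mu) x * h x) + new_row_weight (set mu) * h 0"
proof -
  define n where "n = length mu"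
  define F where "F i = (if i \<le> n then corner_weight (set mu) (part mu i) else new_row_weight (set mu))" for i
  have sub: "addable_rows mu \<subseteq> {1..Suc n}" unfolding addable_rows_def n_def by auto
  have "(\<Sum>i\<in>addable_rows mu. weight (add_box mu i) mu * h (part mu i))
      = (\<Sum>i\<in>addable_rows mu. F i * h (part mu i))"
  proof (rule sum.cong[OF refl])
    fix i assume i: "i \<in> addable_rows mu"
    show "weight (add_box mu i) mu * h (part mu i) = F i * h (part mu i)"
      using weight_add_box_existing_row[OF mu i] weight_add_box_new_row[OF mu] i sub
      unfolding F_def n_def by (cases "i \<le> length mu") (auto simp: le_Suc_eq)
  qed
  also have "\<dots> = (\<Sum>i\<in>{1..Suc n}. F i * h (part mu i))"
  proof (rule sum.mono_neutral_left)
    show "\<forall>i\<in>{1..Suc n} - addable_rows mu. F i * h (part mu i) = 0"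
      using corner_weight_not_addable[OF mu] new_row_weight_not_addable[OF mu]
      unfolding F_def n_def by (auto simp: le_Suc_eq)
  qed (use sub in auto)
  also have "\<dots> = (\<Sum>i\<in>{1..n}. corner_weight (set mu) (part mu i) * h (part mu i)) + new_row_weight (set mu) * h 0"
    by (simp add: F_def n_def part_beyond)
  also have "(\<Sum>i\<in>{1..n}. corner_weight (set mu) (part mu i) * h (part mu i))
      = (\<Sum>x\<in>set mu. corner_weight (set mu) x * h x)"
  proof -
    have "(\<Sum>i\<in>{1..n}. f (part mu i)) = (\<Sum>x\<in>set mu. f x)" for f :: "nat \<Rightarrow> real"
      unfolding n_def image_part[OF mu, symmetric]
      by (rule sum.reindex[OF inj_on_part[OF mu], symmetric, unfolded comp_def])
    then show ?thesis .
  qed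
  finally show ?thesis .
qed

theorem sum_weight_add_box_eq_1:
  assumes mu: "strict_partition mu"
  shows "(\<Sum>i\<in>addable_rows mu. weight (add_box mu i) mu) = 1"
proof -
  have "0 \<notin> set mu" using mu unfolding Defs.strict_partition_def by auto
  then show ?thesis
    using sum_weight_add_box[OF mu, of "\<lambda>_. 1"] new_row_weight_plus_corner_weights[of "set mu"]
    by simp
qed

theorem sum_weight_add_box_content:
  assumes mu: "strict_partition mu"
  shows "(\<Sum>i\<in>addable_rows mu. weight (add_box mu i) mu * (content_binom_sum (add_box mu i) - content_binom_sum mu))
       = real (psize mu)"
proof -
  have "(\<Sum>i\<in>addable_rows mu. weight (add_box mu i) mu * (content_binom_sum (add_box mu i) - content_binom_sum mu))
      = (\<Sum>i\<in>addable_rows mu. weight (add_box mu i) mu * (pronic (part mu i) / 2))"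
  proof (rule sum.cong[OF refl])
    fix i assume "i \<in> addable_rows mu"
    then have "1 \<le> i" "i \<le> Suc (length mu)" using addable_rowsD by auto
    then show "weight (add_box mu i) mu * (content_binom_sum (add_box mu i) - content_binom_sum mu)
        = weight (add_box mu i) mu * (pronic (part mu i) / 2)"
      by (simp add: content_binom_sum_add_box)
  qed
  also have "\<dots> = (\<Sum>x\<in>set mu. corner_weight (set mu) x * (pronic x / 2))"
    using sum_weight_add_box[OF mu, of "\<lambda>x. pronic x / 2"] by simp
  also have "\<dots> = (\<Sum>x\<in>set mu. corner_weight (set mu) x * pronic x) / 2"
    by (simp add: sum_divide_distrib)
  also have "\<dots> = (\<Sum>x\<in>set mu. real x)" by (simp add: corner_weights_pronic_sum)
  also have "\<dots> = real (psize mu)"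
    unfolding Defs.psize_def
    using sum_list_distinct_conv_sum_set[OF strict_partition_distinct[OF mu], of real]
    by (simp add: sum_list_of_nat[symmetric])
  finally show ?thesis .
qed


section \<open>Summing over all extensions by \<open>n\<close> boxes\<close>

definition extensions :: "nat \<Rightarrow> nat list \<Rightarrow> nat list set" where
  "extensions n mu = {lam. strict_partition lam \<and> contains lam mu \<and> psize lam = psize mu + n}"

definition weighted_syt_sum :: "nat \<Rightarrow> nat list \<Rightarrow> (nat list \<Rightarrow> real) \<Rightarrow> real" where
  "weighted_syt_sum n mu g = (\<Sum>lam\<in>extensions n mu. weight lam mu * real (num_syt lam mu) * g lam)"

lemma finite_extensions: "finite (extensions n mu)"
proof (rule finite_subset)
  define N where "N = psize mu + n"
  show "extensions n mu \<subseteq> {xs. set xs \<subseteq> {0..N} \<and> length xs \<le> N}"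
  proof
    fix xs assume "xs \<in> extensions n mu"
    then have pos: "\<forall>x\<in>set xs. 0 < x" and sum: "sum_list xs = N"
      unfolding extensions_def N_def Defs.psize_def Defs.strict_partition_def by auto
    have "length xs \<le> sum_list xs" using pos by (induction xs) auto
    then show "xs \<in> {xs. set xs \<subseteq> {0..N} \<and> length xs \<le> N}"
      using member_le_sum_list[of _ xs] sum by auto
  qed
  show "finite {xs. set xs \<subseteq> {0..N} \<and> length xs \<le> N}" by (rule finite_lists_length_le) simp
qed

lemma extensions_0: "strict_partition mu \<Longrightarrow> extensions 0 mu = {mu}"
proof (intro set_eqI iffI)
  fix lam assume mu: "strict_partition mu" and "lam \<in> extensions 0 mu"
  then have lam: "strict_partition lam" and c: "\<forall>k. part mu k \<le> part lam k" and ps: "psize lam = psize mu"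
    unfolding extensions_def Defs.contains_def by auto
  define N where "N = max (length lam) (length mu)"
  have "(\<Sum>k=1..N. part lam k - part mu k) = 0"
    using ps psize_eq_sum_part[of lam N] psize_eq_sum_part[of mu N] c
    unfolding N_def by (simp add: sum_subtractf_nat)
  then have "\<forall>k\<in>{1..N}. part lam k - part mu k = 0" by (subst sum_eq_0_iff[symmetric]) simp_all
  then have "part lam k = part mu k" if "k \<in> {1..N}" for k
    using that c[rule_format, of k] by fastforce
  moreover have "part lam k = part mu k" if "k \<notin> {1..N}" for k
    using that unfolding N_def by (cases k) (auto simp: part_beyond)
  ultimately have "part lam = part mu" by blast
  then show "lam \<in> {mu}" using strict_partition_part_inject[OF lam mu] by simp
qed (auto simp: extensions_def Defs.contains_def)

lemma extensions_Suc_contains_add_box: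
  assumes i: "i \<in> addable_rows mu"
  shows "{lam \<in> extensions (Suc n) mu. contains lam (add_box mu i)} = extensions n (add_box mu i)"
  using psize_add_box[OF addable_rowsD[OF i, THEN conjunct1] addable_rowsD[OF i, THEN conjunct2]]
    contains_trans[OF _ contains_add_box] addable_rowsD[OF i] i
  unfolding extensions_def addable_rows_def by auto

theorem weighted_syt_sum_Suc:
  assumes mu: "strict_partition mu"
  shows "weighted_syt_sum (Suc n) mu g
       = (\<Sum>i\<in>addable_rows mu. weight (add_box mu i) mu * weighted_syt_sum n (add_box mu i) g)"
proof -
  define summand where "summand i lam = weight (add_box mu i) mu * (weight lam (add_box mu i)
      * real (num_syt lam (add_box mu i)) * g lam)" for i lam
  have "weighted_syt_sum (Suc n) mu g
      = (\<Sum>lam\<in>extensions (Suc n) mu. \<Sum>i\<in>{i \<in> addable_rows mu. contains lam (add_box mu i)}. summand i lam)"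
    unfolding weighted_syt_sum_def
  proof (rule sum.cong[OF refl])
    fix lam assume "lam \<in> extensions (Suc n) mu"
    then have lam: "strict_partition lam" and c: "contains lam mu" and ps: "psize mu < psize lam"
      unfolding extensions_def by auto
    have "weight lam mu * real (num_syt lam mu) * g lam
        = (\<Sum>i\<in>{i \<in> addable_rows mu. contains lam (add_box mu i)}.
             weight lam mu * real (num_syt lam (add_box mu i)) * g lam)"
      unfolding num_syt_remove_minimal[OF lam mu c ps] by (simp add: sum_distrib_left sum_distrib_right)
    also have "\<dots> = (\<Sum>i\<in>{i \<in> addable_rows mu. contains lam (add_box mu i)}. summand i lam)"
    proof (rule sum.cong[OF refl])
      fix i
      show "weight lam mu * real (num_syt lam (add_box mu i)) * g lam = summand i lam"
        unfolding summand_def weight_trans[of lam mu "add_box mu i"] by (simp add: mult_ac)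
    qed
    finally show "weight lam mu * real (num_syt lam mu) * g lam
        = (\<Sum>i\<in>{i \<in> addable_rows mu. contains lam (add_box mu i)}. summand i lam)" .
  qed
  also have "\<dots> = (\<Sum>i\<in>addable_rows mu. \<Sum>lam\<in>{lam \<in> extensions (Suc n) mu. contains lam (add_box mu i)}. summand i lam)"
    by (rule sum.swap_restrict[OF finite_extensions finite_addable_rows])
  also have "\<dots> = (\<Sum>i\<in>addable_rows mu. weight (add_box mu i) mu * weighted_syt_sum n (add_box mu i) g)"
    unfolding weighted_syt_sum_def summand_def
    by (rule sum.cong[OF refl]) (simp add: extensions_Suc_contains_add_box sum_distrib_left)
  finally show ?thesis .
qed

lemma weighted_syt_sum_1:
  "strict_partition mu \<Longrightarrow> weighted_syt_sum n mu (\<lambda>_. 1) = 1"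
proof (induction n arbitrary: mu)
  case 0
  then show ?case
    by (simp add: weighted_syt_sum_def extensions_0 weight_self Defs.num_syt_def Defs.skew_def
        standard_tableaux_empty)
next
  case (Suc n)
  have "strict_partition (add_box mu i)" if "i \<in> addable_rows mu" for i
    using that unfolding addable_rows_def by simp
  then show ?case
    using Suc.IH by (simp add: weighted_syt_sum_Suc[OF Suc.prems] sum_weight_add_box_eq_1[OF Suc.prems])
qed

lemma weighted_syt_sum_plus_const:
  "strict_partition mu \<Longrightarrow> weighted_syt_sum n mu (\<lambda>lam. g lam + c) = weighted_syt_sum n mu g + c"
  using weighted_syt_sum_1[of mu n]
  by (simp add: weighted_syt_sum_def distrib_left sum.distrib sum_distrib_right[symmetric])

theorem weighted_syt_sum_content:
  "strict_partition mu \<Longrightarrow>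
     weighted_syt_sum n mu (\<lambda>lam. content_binom_sum lam - content_binom_sum mu)
       = real (n choose 2) + real n * real (psize mu)"
proof (induction n arbitrary: mu)
  case 0
  then show ?case
    by (simp add: weighted_syt_sum_def extensions_0)
next
  case (Suc n)
  let ?C = content_binom_sum
  define K where "K = real (n choose 2) + real n * real (psize mu + 1)"
  have step: "weighted_syt_sum n (add_box mu i) (\<lambda>lam. ?C lam - ?C mu) = K + (?C (add_box mu i) - ?C mu)"
    if i: "i \<in> addable_rows mu" for i
  proof -
    have nu: "strict_partition (add_box mu i)" using i unfolding addable_rows_def by simp
    have "weighted_syt_sum n (add_box mu i) (\<lambda>lam. ?C lam - ?C mu)
        = weighted_syt_sum n (add_box mu i) (\<lambda>lam. (?C lam - ?C (add_box mu i)) + (?C (add_box mu i) - ?C mu))"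
      by simp
    also have "\<dots> = weighted_syt_sum n (add_box mu i) (\<lambda>lam. ?C lam - ?C (add_box mu i))
        + (?C (add_box mu i) - ?C mu)"
      by (rule weighted_syt_sum_plus_const[OF nu])
    also have "\<dots> = K + (?C (add_box mu i) - ?C mu)"
      using Suc.IH[OF nu] psize_add_box addable_rowsD[OF i] unfolding K_def by simp
    finally show ?thesis .
  qed
  have "weighted_syt_sum (Suc n) mu (\<lambda>lam. ?C lam - ?C mu)
      = (\<Sum>i\<in>addable_rows mu. K * weight (add_box mu i) mu
            + weight (add_box mu i) mu * (?C (add_box mu i) - ?C mu))"
    unfolding weighted_syt_sum_Suc[OF Suc.prems] by (rule sum.cong[OF refl]) (simp add: step algebra_simps)
  also have "\<dots> = K + real (psize mu)"
    by (simp add: sum.distrib sum_distrib_left[symmetric] sum_weight_add_box_eq_1[OF Suc.prems]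
        sum_weight_add_box_content[OF Suc.prems])
  also have "\<dots> = real (Suc n choose 2) + real (Suc n) * real (psize mu)"
    unfolding K_def by (simp add: numeral_2_eq_2 algebra_simps)
  finally show ?case .
qed

theorem theorem1p3:
  fixes mu :: "nat list" and n :: nat
  assumes "strict_partition mu"
  shows "(\<Sum>lam\<in>{lam. strict_partition lam \<and> contains lam mu \<and> psize lam = psize mu + n}.
            (2::real) powi (int (psize lam) - int (plen lam) - int (psize mu) + int (plen mu))
            * real (num_syt lam mu) * real (hookprod mu) / real (hookprod lam)
            * ((\<Sum>b\<in>diagram lam. (real_of_int (content b) gchoose 2))
               - (\<Sum>b\<in>diagram mu. (real_of_int (content b) gchoose 2))))
         = real (n choose 2) + real n * real (psize mu)"
proof -
  have "weighted_syt_sum n mu (\<lambda>lam. content_binom_sum lam - content_binom_sum mu)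
      = real (n choose 2) + real n * real (psize mu)"
    by (rule weighted_syt_sum_content[OF assms])
  then show ?thesis
    unfolding weighted_syt_sum_def extensions_def weight_def content_binom_sum_def
    by (simp add: mult_ac)
qed

end
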